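(* Let $(\mathbf X,\mathbf Y)=\{(X^n,Y^n)\}_{n\ge1}$ be a general correlated source. For any $\varepsilon\in[0,1)$, \[ R_{com}^\varepsilon(\mathbf X|\mathbf Y)=\lim_{\delta\downarrow0}\limsup_{n\to\infty}\frac1n H^{\varepsilon+\delta}(X^n|Y^n)=\lim_{\delta\downarrow0}\limsup_{n\to\infty}\frac1n \tilde H^{\varepsilon+\delta}(X^n|Y^n)=\lim_{\delta\downarrow0}\limsup_{n\to\infty}\frac1n \hat H^{\varepsilon+\delta}(X^n|Y^n). \]
   Context: A general correlated source $(\mathbf X,\mathbf Y)=\{(X^n,Y^n)\}_{n\ge1}$ is an arbitrary sequence of pairs of random variables, $(X^n,Y^n)$ taking values in $\mathcal X^n\times\mathcal Y^n$ where $\mathcal X,\mathcal Y$ are finite or countably infinite, with joint distribution $P_{X^nY^n}$; no stationarity, ergodicity, memorylessness or consistency across $n$ is assumed. All marginal probabilities are assumed positive so conditional distributions are defined everywhere. Logarithms are base 2. One-shot quantities: for a pair $(X,Y)$ on discrete $\mathcal X\times\mathcal Y$ with distribution $P_{XY}$ and a set $\mathcal A\subseteq\mathcal X\times\mathcal Y$ with $P_{XY}(\mathcal A)>0$, let $Q^{\mathcal A}_{XY}(x,y)=P_{XY}(x,y)\mathbf 1[(x,y)\in\mathcal A]/P_{XY}(\mathcal A)$, $Q^{\mathcal A}_Y$ its $Y$-marginal, and $H_{\mathcal A}(X|Y)=\sum_{x,y}Q^{\mathcal A}_{XY}(x,y)\log\frac{Q^{\mathcal A}_Y(y)}{Q^{\mathcal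 A}_{XY}(x,y)}$. Define $H^\varepsilon(X|Y)=\inf\{P_{XY}(\mathcal A)H_{\mathcal A}(X|Y):P_{XY}(\mathcal A)\ge1-\varepsilon\}$, $\tilde H^\varepsilon(X|Y)=\inf\{\sum_{(x,y)\in\mathcal A}P_{XY}(x,y)\log\frac1{P_{X|Y}(x|y)}:P_{XY}(\mathcal A)\ge1-\varepsilon\}$, and $\hat H^\varepsilon(X|Y)=\sum_{i=1}^{i^*}P_{XY}(x_i,y_i)\log\frac1{P_{X|Y}(x_i|y_i)}$, where the pairs of $\mathcal X\times\mathcal Y$ are enumerated as $(x_1,y_1),(x_2,y_2),\dots$ so that $P_{X|Y}(x_i|y_i)$ is nonincreasing in $i$, and $i^*$ is the smallest integer with $\sum_{i=1}^{i^*}P_{XY}(x_i,y_i)\ge1-\varepsilon$. These are applied with $(X,Y)=(X^n,Y^n)$. Coding with common side-information: a code of blocklength $n$ is a pair $(\varphi_n,\psi_n)$ with encoder $\varphi_n:\mathcal X^n\times\mathcal Y^n\to\{0,1\}^*$ such that for each $y^n$ the set of codewords $\{\varphi_n(x^n|y^n):x^n\in\mathcal X^n\}$ is prefix-free, and decoder $\psi_n:\{0,1\}^*\times\mathcal Y^n\to\mathcal X^n$. Its error probability is $\Pr\{\psi_n(\varphi_n(X^n|Y^n),Y^n)\ne X^n\}$ and $\ell_n(x^n|y^n)$ denotes the length of $\varphi_n(x^n|y^n)$. A rate $R$ is $\varepsilon$-achievable if there exist codes with $\limsup_n$ error probability $\le\varepsilon$ and $\limsup_n\frac1n\mathbb E[\ell_n(X^n|Y^n)]\le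 R$; $R^\varepsilon_{com}(\mathbf X|\mathbf Y)$ is the infimum of $\varepsilon$-achievable rates. *)

theory Defs
  imports "HOL-Probability.Probability" "HOL-Library.Sublist"
begin

definition general_source :: "(nat \<Rightarrow> ('a::countable list \<times> 'b::countable list) pmf) \<Rightarrow> bool" where
  "general_source P \<longleftrightarrow>
     (\<forall>n. set_pmf (P n) \<subseteq> {(x, y). length x = n \<and> length y = n}) \<and>
     (\<forall>n x. length x = n \<longrightarrow> pmf (map_pmf fst (P n)) x > 0) \<and>
     (\<forall>n y. length y = n \<longrightarrow> pmf (map_pmf snd (P n)) y > 0)"

definition condP :: "('a \<times> 'b) pmf \<Rightarrow> 'a \<times> 'b \<Rightarrow> real" where
  "condP P p = pmf P p / pmf (map_pmf snd P) (snd p)"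

definition H_A :: "('a \<times> 'b) pmf \<Rightarrow> ('a \<times> 'b) set \<Rightarrow> ennreal" where
  "H_A P A = (let Q = cond_pmf P A; QY = map_pmf snd Q in
     (\<Sum>\<^sub>\<infinity>p. ennreal (pmf Q p * log 2 (pmf QY (snd p) / pmf Q p))))"

definition H_eps :: "('a \<times> 'b) pmf \<Rightarrow> real \<Rightarrow> ennreal" where
  "H_eps P \<epsilon> = (INF A \<in> {A. measure_pmf.prob P A > 0 \<and> measure_pmf.prob P A \<ge> 1 - \<epsilon>}.
                    ennreal (measure_pmf.prob P A) * H_A P A)"

definition Htilde_eps :: "('a \<times> 'b) pmf \<Rightarrow> real \<Rightarrow> ennreal" where
  "Htilde_eps P \<epsilon> = (INF A \<in> {A. measure_pmf.prob P A \<ge> 1 - \<epsilon>}.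
                    (\<Sum>\<^sub>\<infinity>p\<in>A. ennreal (pmf P p * log 2 (1 / condP P p))))"

definition sorted_enum :: "('a \<times> 'b) pmf \<Rightarrow> (nat \<Rightarrow> 'a \<times> 'b) \<Rightarrow> bool" where
  "sorted_enum P e \<longleftrightarrow> (\<exists>N::enat.
      bij_betw e {i. enat i < N} (set_pmf P) \<and>
      (\<forall>i j. enat j < N \<longrightarrow> i \<le> j \<longrightarrow> condP P (e j) \<le> condP P (e i)))"

definition Hhat_eps :: "('a \<times> 'b) pmf \<Rightarrow> (nat \<Rightarrow> 'a \<times> 'b) \<Rightarrow> real \<Rightarrow> ennreal" where
  "Hhat_eps P e \<epsilon> =
     (let istar = (LEAST k. (\<Sum>i<k. pmf P (e i)) \<ge> 1 - \<epsilon>) in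
      ennreal (\<Sum>i<istar. pmf P (e i) * log 2 (1 / condP P (e i))))"

definition prefix_free :: "bool list set \<Rightarrow> bool" where
  "prefix_free C \<longleftrightarrow> (\<forall>c\<in>C. \<forall>c'\<in>C. prefix c c' \<longrightarrow> c = c')"

definition valid_code :: "nat \<Rightarrow> ('a list \<Rightarrow> 'b list \<Rightarrow> bool list) \<Rightarrow> bool" where
  "valid_code n \<phi> \<longleftrightarrow> (\<forall>y. length y = n \<longrightarrow> prefix_free {\<phi> x y | x. length x = n})"

definition err_prob :: "('a list \<times> 'b list) pmf \<Rightarrow> ('a list \<Rightarrow> 'b list \<Rightarrow> bool list)
    \<Rightarrow> (bool list \<Rightarrow> 'b list \<Rightarrow> 'a list) \<Rightarrow> real" where
  "err_prob P \<phi> \<psi> = measure_pmf.prob P {(x, y). \<psi> (\<phi> x y) y \<noteq> x}"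

definition exp_len :: "('a list \<times> 'b list) pmf \<Rightarrow> ('a list \<Rightarrow> 'b list \<Rightarrow> bool list) \<Rightarrow> ennreal" where
  "exp_len P \<phi> = (\<Sum>\<^sub>\<infinity>p. ennreal (pmf P p) * of_nat (length (\<phi> (fst p) (snd p))))"

definition achievable :: "(nat \<Rightarrow> ('a list \<times> 'b list) pmf) \<Rightarrow> real \<Rightarrow> ennreal \<Rightarrow> bool" where
  "achievable P \<epsilon> R \<longleftrightarrow> (\<exists>\<phi> \<psi>. (\<forall>n. valid_code n (\<phi> n)) \<and>
      limsup (\<lambda>n. ennreal (err_prob (P n) (\<phi> n) (\<psi> n))) \<le> ennreal \<epsilon> \<and>
      limsup (\<lambda>n. ennreal (1 / real n) * exp_len (P n) (\<phi> n)) \<le> R)"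

definition R_com :: "(nat \<Rightarrow> ('a list \<times> 'b list) pmf) \<Rightarrow> real \<Rightarrow> ennreal" where
  "R_com P \<epsilon> = Inf {R. achievable P \<epsilon> R}"

end

theory Submission
  imports Defs "HOL-Real_Asymp.Real_Asymp"
begin

text \<open>
  Write \<open>\<iota>(x, y) = log (1 / P\<^sub>X\<^sub>|\<^sub>Y(x|y))\<close>. Restricting \<open>P\<close> to a set \<open>A\<close> only increases
  conditional probabilities, so \<open>H_eps \<le> Htilde_eps\<close>; an initial segment of a sorted enumeration
  is admissible for \<open>Htilde_eps\<close>, so \<open>Htilde_eps \<le> Hhat_eps\<close>; and by an exchange argument
  \<open>Hhat_eps P e \<gamma>\<close> exceeds the \<open>\<iota>\<close>-mass of any set of probability \<open>\<ge> 1 - \<gamma>\<close> by at most one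
  summand, which is at most 2.

  Converse: for a code with error \<open>\<epsilon>\<^sub>n\<close>, Kraft's inequality on each fibre \<open>Y = y\<close> shows that the
  correctly decoded pairs with \<open>\<iota> \<le> \<ell> + \<kappa>\<close> have probability at least \<open>1 - \<epsilon>\<^sub>n - 2\<^sup>-\<^sup>\<kappa>\<close>,
  so \<open>Htilde_eps\<close> and \<open>Hhat_eps\<close> are at most the expected length plus a constant.

  Achievability: for a set \<open>A\<close> nearly attaining \<open>H_eps P \<gamma>\<close>, send the level \<open>k = \<lceil>log r\<rceil>\<close> of
  \<open>r = 1 / Q\<^sup>A\<^sub>X\<^sub>|\<^sub>Y(x|y)\<close> in a header of \<open>O(log n)\<close> bits, then the index of \<open>x\<close> among the at most
  \<open>2\<^sup>k\<close> values of its level. The expected length is about \<open>P(A) H\<^sub>A\<close> and the error about \<open>\<gamma>\<close>;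
  letting \<open>\<gamma>\<close> decrease to \<open>\<epsilon>\<close> slowly along \<open>n\<close> achieves the rate
  \<open>lim\<^sub>\<delta> limsup\<^sub>n H_eps (P n) (\<epsilon> + \<delta>) / n\<close>. The three quantities are sandwiched, so they share
  this limit.
\<close>

section \<open>One-shot conditional entropies\<close>

definition cond_info_term :: "('a \<times> 'b) pmf \<Rightarrow> 'a \<times> 'b \<Rightarrow> real" where
  "cond_info_term P p = pmf P p * log 2 (1 / condP P p)"

lemma infsum_ennreal_pmf: "(\<Sum>\<^sub>\<infinity>p\<in>A. ennreal (pmf P p)) = ennreal (measure_pmf.prob P A)"
proof -
  have "pmf P summable_on A"
    using pmf_abs_summable[of P A] abs_summable_equivalent abs_summable_summable by blast
  then have "ennreal (infsum (pmf P) A) = infsum (ennreal \<circ> pmf P) A"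
    by (simp add: infsum_comm_additive_general)
  moreover have "measure_pmf.prob P A = infsum (pmf P) A"
    using measure_pmf_conv_infsetsum infsetsum_infsum pmf_abs_summable by metis
  ultimately show ?thesis by (simp add: comp_def)
qed

lemma ennreal_summable_on [simp]: "(f :: 'a \<Rightarrow> ennreal) summable_on A"
  by (simp add: nonneg_summable_on_complete)

lemma infsum_cmult_ennreal:
  fixes f :: "'a \<Rightarrow> ennreal"
  shows "(\<Sum>\<^sub>\<infinity>x\<in>A. c * f x) = c * (\<Sum>\<^sub>\<infinity>x\<in>A. f x)"
proof -
  have "(\<Sum>\<^sub>\<infinity>x\<in>A. c * f x) = (SUP F\<in>{F. finite F \<and> F\<subseteq>A}. c * sum f F)"
    by (subst nonneg_infsum_complete) (simp_all add: sum_distrib_left)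
  also have "\<dots> = c * (\<Sum>\<^sub>\<infinity>x\<in>A. f x)"
    by (subst nonneg_infsum_complete) (simp_all add: SUP_mult_left_ennreal)
  finally show ?thesis .
qed

lemma pmf_le_pmf_snd: "pmf P p \<le> pmf (map_pmf snd P) (snd p)"
proof -
  have "pmf P p = measure_pmf.prob P {p}" by (simp add: measure_pmf_single)
  also have "\<dots> \<le> measure_pmf.prob P (snd -` {snd p})"
    by (intro measure_pmf.finite_measure_mono) auto
  finally show ?thesis by (simp add: pmf_map)
qed

lemma condP_pos: "p \<in> set_pmf P \<Longrightarrow> 0 < condP P p"
  using pmf_le_pmf_snd[of P p] by (simp add: condP_def pmf_positive)

lemma pmf_le_condP: "pmf P p \<le> condP P p"
proof (cases "pmf P p = 0")
  case False
  then have "0 < pmf (map_pmf snd P) (snd p)"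
    using pmf_le_pmf_snd[of P p] pmf_nonneg[of P p] by linarith
  then show ?thesis
    using pmf_le_1[of "map_pmf snd P" "snd p"] pmf_nonneg[of P p]
    by (simp add: condP_def le_divide_eq mult_left_le)
qed (simp add: condP_def)

lemma cond_info_term_nonneg: "0 \<le> cond_info_term P p"
proof (cases "p \<in> set_pmf P")
  case True
  have "condP P p \<le> 1"
    using pmf_le_pmf_snd[of P p] True by (simp add: condP_def pmf_positive)
  then show ?thesis using condP_pos[OF True] by (simp add: cond_info_term_def)
qed (simp add: cond_info_term_def set_pmf_eq)

text \<open>The bound \<open>q log (1/q) \<le> 1 / ln 2 \<le> 2\<close> makes a single summand of \<open>Hhat_eps\<close> negligible.\<close>

lemma cond_info_term_le_2: "cond_info_term P p \<le> 2"
proof (cases "p \<in> set_pmf P")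
  case True
  define q where "q = pmf P p"
  have q0: "0 < q" using True by (simp add: q_def pmf_positive)
  have "log 2 (1 / condP P p) \<le> log 2 (1 / q)"
    using q0 pmf_le_condP[of P p] by (simp add: q_def frac_le)
  also have "\<dots> \<le> (1 / q - 1) / ln 2"
    using ln_le_minus_one[of "1 / q"] q0 by (simp add: log_def divide_right_mono)
  finally have "cond_info_term P p \<le> q * ((1 / q - 1) / ln 2)"
    unfolding cond_info_term_def q_def using q0 by (intro mult_left_mono) (simp_all add: q_def)
  also have "\<dots> = (1 - q) / ln 2" using q0 by (simp add: field_simps)
  also have "\<dots> \<le> 1 / ln 2" using q0 by (simp add: divide_right_mono)
  also have "\<dots> \<le> 2" using ln2_ge_two_thirds by (simp add: field_simps)
  finally show ?thesis .
qed (simp add: cond_info_term_def set_pmf_eq)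

text \<open>\<open>cond_ratio P A p\<close> is \<open>1 / Q\<^sup>A\<^sub>X\<^sub>|\<^sub>Y(x|y)\<close>, the inverse conditional probability of \<open>p = (x, y)\<close>
  under \<open>P\<close> restricted to \<open>A\<close>.\<close>

definition cond_ratio :: "('a \<times> 'b) pmf \<Rightarrow> ('a \<times> 'b) set \<Rightarrow> 'a \<times> 'b \<Rightarrow> real" where
  "cond_ratio P A p = measure_pmf.prob P (A \<inter> snd -` {snd p}) / pmf P p"

lemma cond_ratio_ge_1:
  assumes "p \<in> A" and "p \<in> set_pmf P"
  shows "1 \<le> cond_ratio P A p"
proof -
  have "pmf P p = measure_pmf.prob P {p}" by (simp add: measure_pmf_single)
  also have "\<dots> \<le> measure_pmf.prob P (A \<inter> snd -` {snd p})"
    using assms(1) by (intro measure_pmf.finite_measure_mono) auto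
  finally show ?thesis using assms(2) by (simp add: cond_ratio_def pmf_positive)
qed

lemma cond_ratio_le_inverse_condP:
  assumes "p \<in> set_pmf P"
  shows "cond_ratio P A p \<le> 1 / condP P p"
proof -
  have "measure_pmf.prob P (A \<inter> snd -` {snd p}) \<le> measure_pmf.prob P (snd -` {snd p})"
    by (intro measure_pmf.finite_measure_mono) auto
  then show ?thesis
    using assms by (simp add: cond_ratio_def condP_def pmf_map pmf_positive divide_right_mono)
qed

lemma pmf_cond_pmf_eq:
  assumes "0 < measure_pmf.prob P A"
  shows "pmf (cond_pmf P A) p = (if p \<in> A then pmf P p / measure_pmf.prob P A else 0)"
proof -
  have "set_pmf P \<inter> A \<noteq> {}"
    using assms measure_pmf_zero_iff[of P A] by auto
  then show ?thesis by (simp add: pmf_cond)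
qed

lemma measure_cond_pmf_eq:
  assumes "0 < measure_pmf.prob P A"
  shows "measure_pmf.prob (cond_pmf P A) B = measure_pmf.prob P (A \<inter> B) / measure_pmf.prob P A"
proof -
  have "set_pmf P \<inter> A \<noteq> {}"
    using assms measure_pmf_zero_iff[of P A] by auto
  moreover have "emeasure (measure_pmf P) A \<noteq> 0"
    using assms by (simp add: measure_pmf.emeasure_eq_measure)
  ultimately show ?thesis
    by (simp add: cond_pmf.rep_eq measure_uniform_measure measure_pmf.emeasure_eq_measure)
qed

lemma prob_mult_H_A_eq:
  assumes m: "0 < measure_pmf.prob P A"
  shows "ennreal (measure_pmf.prob P A) * H_A P A
       = (\<Sum>\<^sub>\<infinity>p\<in>A \<inter> set_pmf P. ennreal (pmf P p * log 2 (cond_ratio P A p)))"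
proof -
  let ?m = "measure_pmf.prob P A" and ?Q = "cond_pmf P A"
  define g where "g p = ennreal (pmf ?Q p * log 2 (pmf (map_pmf snd ?Q) (snd p) / pmf ?Q p))" for p
  have summand: "ennreal ?m * g p = ennreal (pmf P p * log 2 (cond_ratio P A p))"
    if "p \<in> A" "p \<in> set_pmf P" for p
  proof -
    have q: "pmf ?Q p = pmf P p / ?m" using pmf_cond_pmf_eq[OF m] that by simp
    have "pmf (map_pmf snd ?Q) (snd p) / pmf ?Q p = cond_ratio P A p"
      using m that by (simp add: q pmf_map measure_cond_pmf_eq cond_ratio_def pmf_positive)
    then show ?thesis
      using m by (simp add: g_def q ennreal_mult'[symmetric])
  qed
  have null: "pmf ?Q p = 0" if "p \<notin> A \<inter> set_pmf P" for p
    using that by (auto simp: pmf_cond_pmf_eq[OF m] set_pmf_iff)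
  have "ennreal ?m * H_A P A = (\<Sum>\<^sub>\<infinity>p. ennreal ?m * g p)"
    unfolding H_A_def g_def Let_def by (rule infsum_cmult_ennreal[symmetric])
  also have "\<dots> = (\<Sum>\<^sub>\<infinity>p\<in>A \<inter> set_pmf P. ennreal ?m * g p)"
    by (rule infsum_cong_neutral) (simp_all add: g_def null)
  also have "\<dots> = (\<Sum>\<^sub>\<infinity>p\<in>A \<inter> set_pmf P. ennreal (pmf P p * log 2 (cond_ratio P A p)))"
    by (rule infsum_cong) (use summand in blast)
  finally show ?thesis .
qed

lemma prob_mult_H_A_le:
  assumes "0 < measure_pmf.prob P A"
  shows "ennreal (measure_pmf.prob P A) * H_A P A \<le> (\<Sum>\<^sub>\<infinity>p\<in>A. ennreal (cond_info_term P p))"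
  unfolding prob_mult_H_A_eq[OF assms]
proof (rule infsum_mono_neutral)
  fix p assume "p \<in> A \<inter> set_pmf P \<inter> A"
  then have "log 2 (cond_ratio P A p) \<le> log 2 (1 / condP P p)"
    using cond_ratio_ge_1[of p A P] cond_ratio_le_inverse_condP[of p P A] by (intro log_mono) auto
  then show "ennreal (pmf P p * log 2 (cond_ratio P A p)) \<le> ennreal (cond_info_term P p)"
    unfolding cond_info_term_def by (intro ennreal_leI mult_left_mono) simp_all
qed auto

lemma H_eps_le_Htilde_eps:
  assumes "\<gamma> < 1"
  shows "H_eps P \<gamma> \<le> Htilde_eps P \<gamma>"
  unfolding H_eps_def Htilde_eps_def cond_info_term_def[symmetric]
proof (rule INF_mono)
  fix A assume A: "A \<in> {A. 1 - \<gamma> \<le> measure_pmf.prob P A}"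
  then have "0 < measure_pmf.prob P A" using assms by simp
  with A prob_mult_H_A_le[of P A]
  show "\<exists>A'\<in>{A. 0 < measure_pmf.prob P A \<and> 1 - \<gamma> \<le> measure_pmf.prob P A}.
      ennreal (measure_pmf.prob P A') * H_A P A' \<le> (\<Sum>\<^sub>\<infinity>p\<in>A. ennreal (cond_info_term P p))"
    by blast
qed

lemma H_eps_antimono: "\<gamma> \<le> \<gamma>' \<Longrightarrow> H_eps P \<gamma>' \<le> H_eps P \<gamma>"
  unfolding H_eps_def by (rule INF_superset_mono) auto

lemma Htilde_eps_le_infsum:
  "1 - \<gamma> \<le> measure_pmf.prob P A \<Longrightarrow> Htilde_eps P \<gamma> \<le> (\<Sum>\<^sub>\<infinity>p\<in>A. ennreal (cond_info_term P p))"
  unfolding Htilde_eps_def cond_info_term_def by (rule INF_lower) simp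

lemma sum_cond_info_term_ennreal:
  "finite B \<Longrightarrow> ennreal (sum (cond_info_term P) B) = (\<Sum>\<^sub>\<infinity>p\<in>B. ennreal (cond_info_term P p))"
  by (simp add: sum_ennreal cond_info_term_nonneg)

lemma prob_mult_le_infsum_cond_info_term:
  assumes t0: "0 \<le> t" and ge: "\<And>p. p \<in> set_pmf P \<Longrightarrow> p \<in> B \<Longrightarrow> t \<le> log 2 (1 / condP P p)"
  shows "ennreal (t * measure_pmf.prob P B) \<le> (\<Sum>\<^sub>\<infinity>p\<in>B. ennreal (cond_info_term P p))"
proof -
  have "ennreal (t * measure_pmf.prob P B) = (\<Sum>\<^sub>\<infinity>p\<in>B. ennreal t * ennreal (pmf P p))"
    using t0 by (simp add: infsum_ennreal_pmf infsum_cmult_ennreal ennreal_mult)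
  also have "\<dots> \<le> (\<Sum>\<^sub>\<infinity>p\<in>B. ennreal (cond_info_term P p))"
  proof (rule infsum_mono)
    fix p assume p: "p \<in> B"
    show "ennreal t * ennreal (pmf P p) \<le> ennreal (cond_info_term P p)"
    proof (cases "p \<in> set_pmf P")
      case True
      then have "t * pmf P p \<le> cond_info_term P p"
        using mult_right_mono[OF ge[of p] pmf_nonneg[of P p]] p by (simp add: cond_info_term_def mult.commute)
      then show ?thesis using t0 by (simp add: ennreal_mult[symmetric] ennreal_leI)
    qed (simp add: set_pmf_eq)
  qed simp_all
  finally show ?thesis .
qed

text \<open>Exchange argument: the mass of \<open>T - A\<close> is at most that of \<open>A - T\<close>, and each unit of it
  carries at most the information \<open>t\<close> that each unit of \<open>A - T\<close> carries at least.\<close>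

lemma sum_cond_info_term_le_infsum:
  assumes fin: "finite T" and mass: "measure_pmf.prob P T \<le> measure_pmf.prob P A" and t0: "0 \<le> t"
    and inT: "\<And>p. p \<in> T \<Longrightarrow> log 2 (1 / condP P p) \<le> t"
    and offT: "\<And>p. p \<in> set_pmf P \<Longrightarrow> p \<notin> T \<Longrightarrow> t \<le> log 2 (1 / condP P p)"
  shows "ennreal (sum (cond_info_term P) T) \<le> (\<Sum>\<^sub>\<infinity>p\<in>A. ennreal (cond_info_term P p))"
proof -
  let ?F = "\<lambda>p. ennreal (cond_info_term P p)"
  have "measure_pmf.prob P (T - A) = measure_pmf.prob P T - measure_pmf.prob P (A \<inter> T)"
    by (simp add: measure_pmf.finite_measure_Diff' inf_commute)
  also have "\<dots> \<le> measure_pmf.prob P (A - T)"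
    using mass by (simp add: measure_pmf.finite_measure_Diff')
  finally have swap: "measure_pmf.prob P (T - A) \<le> measure_pmf.prob P (A - T)" .
  have "sum (cond_info_term P) (T - A) \<le> (\<Sum>p\<in>T - A. t * pmf P p)"
  proof (rule sum_mono)
    fix p assume "p \<in> T - A"
    then show "cond_info_term P p \<le> t * pmf P p"
      using mult_right_mono[OF inT[of p] pmf_nonneg[of P p]] by (simp add: cond_info_term_def mult.commute)
  qed
  also have "\<dots> = t * measure_pmf.prob P (T - A)"
    using fin by (simp add: measure_measure_pmf_finite sum_distrib_left)
  also have "\<dots> \<le> t * measure_pmf.prob P (A - T)"
    using swap t0 by (rule mult_left_mono)
  finally have "sum (cond_info_term P) T \<le> sum (cond_info_term P) (T \<inter> A) + t * measure_pmf.prob P (A - T)"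
    using sum.Int_Diff[OF fin, of "cond_info_term P" A] by linarith
  then have "ennreal (sum (cond_info_term P) T)
      \<le> ennreal (sum (cond_info_term P) (T \<inter> A) + t * measure_pmf.prob P (A - T))"
    by (rule ennreal_leI)
  also have "\<dots> = ennreal (sum (cond_info_term P) (T \<inter> A)) + ennreal (t * measure_pmf.prob P (A - T))"
    by (rule ennreal_plus) (simp_all add: sum_nonneg cond_info_term_nonneg t0)
  also have "ennreal (t * measure_pmf.prob P (A - T)) \<le> (\<Sum>\<^sub>\<infinity>p\<in>A - T. ?F p)"
    using t0 offT by (intro prob_mult_le_infsum_cond_info_term) simp_all
  also have "ennreal (sum (cond_info_term P) (T \<inter> A)) + (\<Sum>\<^sub>\<infinity>p\<in>A - T. ?F p) = (\<Sum>\<^sub>\<infinity>p\<in>A. ?F p)"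
  proof -
    have "(\<Sum>\<^sub>\<infinity>p\<in>(T \<inter> A) \<union> (A - T). ?F p) = (\<Sum>\<^sub>\<infinity>p\<in>T \<inter> A. ?F p) + (\<Sum>\<^sub>\<infinity>p\<in>A - T. ?F p)"
      by (rule infsum_Un_disjoint) auto
    moreover have "(T \<inter> A) \<union> (A - T) = A" by blast
    ultimately show ?thesis using fin by (simp add: sum_cond_info_term_ennreal)
  qed
  finally show ?thesis by (simp add: add_left_mono)
qed

definition hat_index :: "('a \<times> 'b) pmf \<Rightarrow> (nat \<Rightarrow> 'a \<times> 'b) \<Rightarrow> real \<Rightarrow> nat" where
  "hat_index P e \<gamma> = (LEAST k. 1 - \<gamma> \<le> (\<Sum>i<k. pmf P (e i)))"

lemma Hhat_eps_eq_sum: "Hhat_eps P e \<gamma> = ennreal (\<Sum>i<hat_index P e \<gamma>. cond_info_term P (e i))"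
  unfolding Hhat_eps_def hat_index_def cond_info_term_def Let_def by simp

lemma enum_partial_sum_reaches:
  assumes bij: "bij_betw e {i. enat i < N} (set_pmf P)" and g: "0 < \<gamma>"
  shows "\<exists>k. enat k \<le> N \<and> 1 - \<gamma> \<le> (\<Sum>i<k. pmf P (e i))"
proof (cases N)
  case (enat M)
  then have b: "bij_betw e {..<M} (set_pmf P)" using bij by (simp add: lessThan_def)
  then have "finite (set_pmf P)" using bij_betw_finite by blast
  then have "(\<Sum>i<M. pmf P (e i)) = 1"
    using sum.reindex_bij_betw[OF b, of "pmf P"] sum_pmf_eq_1[OF _ order_refl] by simp
  then show ?thesis using enat g by (intro exI[of _ M]) auto
next
  case infinity
  then have b: "bij_betw e UNIV (set_pmf P)" using bij by simp
  have "(pmf P has_sum 1) (set_pmf P)"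
  proof -
    have "infsum (pmf P) (set_pmf P) = measure_pmf.prob P (set_pmf P)"
      using measure_pmf_conv_infsetsum infsetsum_infsum pmf_abs_summable by metis
    moreover have "pmf P summable_on set_pmf P"
      using pmf_abs_summable[of P] abs_summable_equivalent abs_summable_summable by blast
    ultimately show ?thesis
      by (simp add: has_sum_iff measure_pmf.prob_eq_1 AE_measure_pmf)
  qed
  then have "(\<lambda>i. pmf P (e i)) sums 1"
    using has_sum_reindex_bij_betw[OF b] has_sum_imp_sums by blast
  then have "eventually (\<lambda>k. 1 - \<gamma> < (\<Sum>i<k. pmf P (e i))) sequentially"
    using g by (intro order_tendstoD) (auto simp: sums_def)
  then obtain k where "1 - \<gamma> < (\<Sum>i<k. pmf P (e i))"
    by (meson eventually_sequentially le_refl)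
  then show ?thesis using infinity by (intro exI[of _ k]) auto
qed

context
  fixes P :: "('a \<times> 'b) pmf" and e :: "nat \<Rightarrow> 'a \<times> 'b" and \<gamma> :: real and N :: enat
  assumes bij: "bij_betw e {i. enat i < N} (set_pmf P)"
    and decreasing: "\<And>i j. enat j < N \<Longrightarrow> i \<le> j \<Longrightarrow> condP P (e j) \<le> condP P (e i)"
    and g: "0 < \<gamma>"
begin

lemma hat_index_mass: "1 - \<gamma> \<le> (\<Sum>i<hat_index P e \<gamma>. pmf P (e i))"
  and hat_index_le: "enat (hat_index P e \<gamma>) \<le> N"
proof -
  obtain k where k: "enat k \<le> N" "1 - \<gamma> \<le> (\<Sum>i<k. pmf P (e i))"
    using enum_partial_sum_reaches[OF bij g] by blast
  show "1 - \<gamma> \<le> (\<Sum>i<hat_index P e \<gamma>. pmf P (e i))"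
    unfolding hat_index_def by (rule LeastI[of _ k]) (rule k(2))
  have "hat_index P e \<gamma> \<le> k" unfolding hat_index_def by (rule Least_le) (rule k(2))
  then have "enat (hat_index P e \<gamma>) \<le> enat k" by simp
  then show "enat (hat_index P e \<gamma>) \<le> N" using k(1) by (rule order_trans)
qed

lemma enum_below_hat_index: "{..<hat_index P e \<gamma>} \<subseteq> {i. enat i < N}"
proof
  fix i assume "i \<in> {..<hat_index P e \<gamma>}"
  then have "enat i < enat (hat_index P e \<gamma>)" by simp
  then show "i \<in> {i. enat i < N}" using order_less_le_trans[OF _ hat_index_le] by simp
qed

lemma inj_on_enum:
  assumes "k \<le> hat_index P e \<gamma>"
  shows "inj_on e {..<k}"
proof (rule inj_on_subset[OF bij_betw_imp_inj_on[OF bij]])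
  have "{..<k} \<subseteq> {..<hat_index P e \<gamma>}" using assms by simp
  then show "{..<k} \<subseteq> {i. enat i < N}" using enum_below_hat_index by (rule subset_trans)
qed

lemma condP_le_enum_prefix:
  assumes "enat j < N" and "p \<in> e ` {..<j}"
  shows "condP P (e j) \<le> condP P p"
  using assms decreasing[OF assms(1)] by auto

lemma condP_outside_enum_prefix_le:
  assumes "p \<in> set_pmf P" and "p \<notin> e ` {..<j}"
  shows "condP P p \<le> condP P (e j)"
proof -
  have "p \<in> e ` {i. enat i < N}" using assms(1) bij_betw_imp_surj_on[OF bij] by simp
  then obtain i where i: "enat i < N" "p = e i" by blast
  with assms(2) have "j \<le> i" by (auto simp: not_le)
  with decreasing[OF i(1)] i(2) show ?thesis by simp
qed

lemma Htilde_eps_le_Hhat_eps_enum: "Htilde_eps P \<gamma> \<le> Hhat_eps P e \<gamma>"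
proof -
  let ?S = "e ` {..<hat_index P e \<gamma>}"
  have inj: "inj_on e {..<hat_index P e \<gamma>}" using inj_on_enum by simp
  have "measure_pmf.prob P ?S = (\<Sum>i<hat_index P e \<gamma>. pmf P (e i))"
    using inj by (simp add: measure_measure_pmf_finite sum.reindex)
  then have "Htilde_eps P \<gamma> \<le> (\<Sum>\<^sub>\<infinity>p\<in>?S. ennreal (cond_info_term P p))"
    using hat_index_mass by (intro Htilde_eps_le_infsum) simp
  also have "\<dots> = ennreal (sum (cond_info_term P) ?S)"
    by (simp add: sum_cond_info_term_ennreal)
  also have "\<dots> = Hhat_eps P e \<gamma>"
    using inj by (simp add: Hhat_eps_eq_sum sum.reindex)
  finally show ?thesis .
qed

text \<open>All summands of \<open>Hhat_eps\<close> but the last form a set of mass below \<open>1 - \<gamma>\<close> with maximal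
  conditional probabilities, so the exchange argument applies to them; the last one costs at most 2.\<close>

lemma Hhat_eps_le_infsum_enum:
  assumes A: "1 - \<gamma> \<le> measure_pmf.prob P A"
  shows "Hhat_eps P e \<gamma> \<le> (\<Sum>\<^sub>\<infinity>p\<in>A. ennreal (cond_info_term P p)) + 2"
proof (cases "hat_index P e \<gamma>")
  case 0
  then show ?thesis by (simp add: Hhat_eps_eq_sum)
next
  case (Suc j)
  define T where "T = e ` {..<j}"
  define t where "t = log 2 (1 / condP P (e j))"
  have jN: "enat j < N" using subsetD[OF enum_below_hat_index, of j] Suc by simp
  have ej: "e j \<in> set_pmf P" using bij_betwE[OF bij] jN by blast
  have inj: "inj_on e {..<j}" using inj_on_enum Suc by simp
  have "j < (LEAST k. 1 - \<gamma> \<le> (\<Sum>i<k. pmf P (e i)))"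
    using Suc by (simp add: hat_index_def)
  then have "(\<Sum>i<j. pmf P (e i)) < 1 - \<gamma>"
    using not_less_Least by fastforce
  moreover have "measure_pmf.prob P T = (\<Sum>i<j. pmf P (e i))"
    using inj by (simp add: T_def measure_measure_pmf_finite sum.reindex)
  ultimately have mass: "measure_pmf.prob P T \<le> measure_pmf.prob P A" using A by simp
  have t0: "0 \<le> t"
    using condP_pos[OF ej] pmf_le_pmf_snd[of P "e j"] ej
    by (simp add: t_def condP_def pmf_positive)
  have inT: "log 2 (1 / condP P p) \<le> t" if "p \<in> T" for p
    using condP_le_enum_prefix[OF jN, of p] that condP_pos[OF ej] by (simp add: T_def t_def frac_le)
  have offT: "t \<le> log 2 (1 / condP P p)" if "p \<in> set_pmf P" "p \<notin> T" for p
    using condP_outside_enum_prefix_le[OF that[unfolded T_def]] condP_pos[OF that(1)]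
    by (simp add: t_def frac_le)
  have "(\<Sum>i<hat_index P e \<gamma>. cond_info_term P (e i)) = sum (cond_info_term P) T + cond_info_term P (e j)"
    using Suc inj by (simp add: T_def sum.reindex)
  then have "Hhat_eps P e \<gamma> = ennreal (sum (cond_info_term P) T) + ennreal (cond_info_term P (e j))"
    by (simp add: Hhat_eps_eq_sum ennreal_plus sum_nonneg cond_info_term_nonneg)
  also have "\<dots> \<le> (\<Sum>\<^sub>\<infinity>p\<in>A. ennreal (cond_info_term P p)) + 2"
  proof (rule add_mono)
    show "ennreal (sum (cond_info_term P) T) \<le> (\<Sum>\<^sub>\<infinity>p\<in>A. ennreal (cond_info_term P p))"
      by (rule sum_cond_info_term_le_infsum[OF _ mass t0 inT offT]) (simp add: T_def)
    show "ennreal (cond_info_term P (e j)) \<le> 2"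
      using ennreal_leI[OF cond_info_term_le_2] by simp
  qed
  finally show ?thesis .
qed

end

lemma Htilde_eps_le_Hhat_eps:
  "sorted_enum P e \<Longrightarrow> 0 < \<gamma> \<Longrightarrow> Htilde_eps P \<gamma> \<le> Hhat_eps P e \<gamma>"
  unfolding sorted_enum_def using Htilde_eps_le_Hhat_eps_enum by blast

lemma Hhat_eps_le_infsum:
  "sorted_enum P e \<Longrightarrow> 0 < \<gamma> \<Longrightarrow> 1 - \<gamma> \<le> measure_pmf.prob P A
    \<Longrightarrow> Hhat_eps P e \<gamma> \<le> (\<Sum>\<^sub>\<infinity>p\<in>A. ennreal (cond_info_term P p)) + 2"
  unfolding sorted_enum_def using Hhat_eps_le_infsum_enum by blast

section \<open>Kraft's inequality and the one-shot converse\<close>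

lemma prefix_free_subset: "prefix_free C \<Longrightarrow> D \<subseteq> C \<Longrightarrow> prefix_free D"
  unfolding prefix_free_def by blast

lemma kraft_inequality:
  assumes "finite C" and "prefix_free C"
  shows "(\<Sum>c\<in>C. (1/2::real) ^ length c) \<le> 1"
proof -
  have "(\<Sum>c\<in>C. (1/2::real) ^ length c) \<le> 1"
    if "finite C" "prefix_free C" "\<forall>c\<in>C. length c \<le> n" for C :: "bool list set" and n
    using that
  proof (induction n arbitrary: C)
    case 0
    then have "C = {} \<or> C = {[]}" by auto
    then show ?case by auto
  next
    case (Suc n)
    show ?case
    proof (cases "[] \<in> C")
      case True
      then have "\<forall>c\<in>C. c = []" using Suc.prems(2) unfolding prefix_free_def by (metis Nil_prefix)
      then have "C = {[]}" using True by blast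
      then show ?thesis by simp
    next
      case False
      define tl_set where "tl_set b = {c. b # c \<in> C}" for b
      have fin: "finite (tl_set b)" for b
        using finite_vimageI[OF Suc.prems(1), of "Cons b"] by (simp add: tl_set_def vimage_def)
      have tails: "(\<Sum>c\<in>tl_set b. (1/2::real) ^ length c) \<le> 1" for b
      proof (rule Suc.IH[OF fin])
        show "prefix_free (tl_set b)"
          using Suc.prems(2) unfolding prefix_free_def tl_set_def by fastforce
        show "\<forall>c\<in>tl_set b. length c \<le> n"
          using Suc.prems(3) unfolding tl_set_def by fastforce
      qed
      have C: "C = Cons True ` tl_set True \<union> Cons False ` tl_set False"
      proof (rule set_eqI)
        fix c show "c \<in> C \<longleftrightarrow> c \<in> Cons True ` tl_set True \<union> Cons False ` tl_set False"
          using False by (cases c) (simp_all add: tl_set_def image_iff, metis (full_types))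
      qed
      have "(\<Sum>c\<in>C. (1/2::real) ^ length c)
          = (1/2) * (\<Sum>c\<in>tl_set True. (1/2) ^ length c) + (1/2) * (\<Sum>c\<in>tl_set False. (1/2) ^ length c)"
        unfolding C using fin by (subst sum.union_disjoint) (auto simp: sum.reindex sum_distrib_left)
      also have "\<dots> \<le> 1" using tails[of True] tails[of False] by simp
      finally show ?thesis .
    qed
  qed
  moreover have "\<forall>c\<in>C. length c \<le> Max (length ` C)" using assms(1) by simp
  ultimately show ?thesis using assms by blast
qed

lemma kraft_inequality_inj:
  assumes "prefix_free C" and "finite F" and "inj_on w F" and "w ` F \<subseteq> C"
  shows "(\<Sum>p\<in>F. (1/2::real) ^ length (w p)) \<le> 1"
proof -
  have "(\<Sum>p\<in>F. (1/2::real) ^ length (w p)) = (\<Sum>c\<in>w ` F. (1/2::real) ^ length c)"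
    using assms(3) by (simp add: sum.reindex)
  also have "\<dots> \<le> 1"
    using kraft_inequality[of "w ` F"] prefix_free_subset[OF assms(1,4)] assms(2) by simp
  finally show ?thesis .
qed

text \<open>A code with side information \<open>y\<close> satisfies the Kraft inequality on each fibre \<open>Y = y\<close>;
  averaging over \<open>y\<close> gives the inequality below for the correctly decoded pairs.\<close>

lemma kraft_inequality_side_info:
  fixes P :: "('a \<times> 'b) pmf" and \<phi> :: "'a \<Rightarrow> 'b \<Rightarrow> bool list"
  assumes pf: "\<And>y. prefix_free {\<phi> x y | x. (x, y) \<in> set_pmf P}"
    and F: "finite F" "F \<subseteq> {p \<in> set_pmf P. \<psi> (\<phi> (fst p) (snd p)) (snd p) = fst p}"
  shows "(\<Sum>p\<in>F. (1/2::real) ^ length (\<phi> (fst p) (snd p)) * pmf (map_pmf snd P) (snd p)) \<le> 1"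
proof -
  let ?g = "\<lambda>p. (1/2::real) ^ length (\<phi> (fst p) (snd p)) * pmf (map_pmf snd P) (snd p)"
  have dec: "\<psi> (\<phi> (fst p) (snd p)) (snd p) = fst p" and supp: "p \<in> set_pmf P" if "p \<in> F" for p
    using F(2) that by blast+
  have fibre: "(\<Sum>p\<in>{p\<in>F. snd p = y}. (1/2::real) ^ length (\<phi> (fst p) y)) \<le> 1" for y
  proof (rule kraft_inequality_inj[OF pf])
    show "inj_on (\<lambda>p. \<phi> (fst p) y) {p\<in>F. snd p = y}"
    proof (rule inj_onI)
      fix p q assume p: "p \<in> {p\<in>F. snd p = y}" and q: "q \<in> {p\<in>F. snd p = y}"
        and eq: "\<phi> (fst p) y = \<phi> (fst q) y"
      have "fst p = \<psi> (\<phi> (fst p) y) y" using dec[of p] p by auto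
      also have "\<dots> = fst q" using dec[of q] q eq by auto
      finally show "p = q" using p q by (simp add: prod_eq_iff)
    qed
    show "(\<lambda>p. \<phi> (fst p) y) ` {p\<in>F. snd p = y} \<subseteq> {\<phi> x y | x. (x, y) \<in> set_pmf P}"
    proof
      fix c assume "c \<in> (\<lambda>p. \<phi> (fst p) y) ` {p\<in>F. snd p = y}"
      then obtain p where p: "p \<in> F" "snd p = y" "c = \<phi> (fst p) y" by blast
      then have "(fst p, y) \<in> set_pmf P" using supp[of p] by (metis prod.collapse)
      then show "c \<in> {\<phi> x y | x. (x, y) \<in> set_pmf P}" using p(3) by blast
    qed
  qed (use F(1) in simp)
  have "sum ?g F = (\<Sum>y\<in>snd ` F. sum ?g {p\<in>F. snd p = y})" by (rule sum.image_gen[OF F(1)])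
  also have "\<dots> \<le> (\<Sum>y\<in>snd ` F. pmf (map_pmf snd P) y)"
  proof (rule sum_mono)
    fix y
    have "sum ?g {p\<in>F. snd p = y}
        = pmf (map_pmf snd P) y * (\<Sum>p\<in>{p\<in>F. snd p = y}. (1/2::real) ^ length (\<phi> (fst p) y))"
      by (simp add: sum_distrib_left mult.commute)
    also have "\<dots> \<le> pmf (map_pmf snd P) y" using fibre[of y] by (simp add: mult_left_le)
    finally show "sum ?g {p\<in>F. snd p = y} \<le> pmf (map_pmf snd P) y" .
  qed
  also have "\<dots> = measure_pmf.prob (map_pmf snd P) (snd ` F)"
    by (rule measure_measure_pmf_finite[symmetric]) (use F(1) in simp)
  also have "\<dots> \<le> 1" by simp
  finally show ?thesis .
qed

lemma infsum_kraft_inequality_side_info: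
  fixes P :: "('a \<times> 'b) pmf" and \<phi> :: "'a \<Rightarrow> 'b \<Rightarrow> bool list"
  assumes pf: "\<And>y. prefix_free {\<phi> x y | x. (x, y) \<in> set_pmf P}"
    and D: "D \<subseteq> {p \<in> set_pmf P. \<psi> (\<phi> (fst p) (snd p)) (snd p) = fst p}"
  shows "(\<Sum>\<^sub>\<infinity>p\<in>D. ennreal ((1/2) ^ length (\<phi> (fst p) (snd p)) * pmf (map_pmf snd P) (snd p))) \<le> 1"
  unfolding nonneg_infsum_complete[OF zero_le]
proof (rule SUP_least)
  fix F assume F: "F \<in> {F. finite F \<and> F \<subseteq> D}"
  then have "(\<Sum>p\<in>F. ennreal ((1/2) ^ length (\<phi> (fst p) (snd p)) * pmf (map_pmf snd P) (snd p)))
      = ennreal (\<Sum>p\<in>F. (1/2) ^ length (\<phi> (fst p) (snd p)) * pmf (map_pmf snd P) (snd p))"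
    by (intro sum_ennreal) simp
  also have "\<dots> \<le> ennreal 1"
    using kraft_inequality_side_info[OF pf, of F \<psi>] F D by (intro ennreal_leI) auto
  finally show "(\<Sum>p\<in>F. ennreal ((1/2) ^ length (\<phi> (fst p) (snd p)) * pmf (map_pmf snd P) (snd p))) \<le> 1"
    by simp
qed

text \<open>Barron's lemma: since \<open>P(x, y) = P\<^sub>Y(y) P\<^sub>X\<^sub>|\<^sub>Y(x|y) < 2\<^sup>-\<^sup>\<kappa> 2\<^sup>-\<^sup>\<ell> P\<^sub>Y(y)\<close> on the event below,
  Kraft's inequality bounds its probability.\<close>

lemma prob_short_codeword_le:
  fixes P :: "('a \<times> 'b) pmf" and \<phi> :: "'a \<Rightarrow> 'b \<Rightarrow> bool list"
  assumes pf: "\<And>y. prefix_free {\<phi> x y | x. (x, y) \<in> set_pmf P}"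
  shows "measure_pmf.prob P {p \<in> set_pmf P. \<psi> (\<phi> (fst p) (snd p)) (snd p) = fst p \<and>
           real (length (\<phi> (fst p) (snd p))) + \<kappa> < log 2 (1 / condP P p)} \<le> 2 powr (-\<kappa>)"
    (is "measure_pmf.prob P ?D \<le> _")
proof -
  define g where "g p = (1/2::real) ^ length (\<phi> (fst p) (snd p)) * pmf (map_pmf snd P) (snd p)" for p
  have pmf_less: "pmf P p < 2 powr (-\<kappa>) * g p" if "p \<in> ?D" for p
  proof -
    let ?L = "real (length (\<phi> (fst p) (snd p))) + \<kappa>"
    have c0: "0 < condP P p" using that condP_pos by blast
    have "2 powr ?L < 1 / condP P p" using that c0 by (simp add: less_log_iff)
    then have "condP P p < 2 powr (-\<kappa>) * (1/2) ^ length (\<phi> (fst p) (snd p))"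
      using c0 by (simp add: field_simps powr_add powr_minus powr_realpow power_one_over)
    moreover have "0 < pmf (map_pmf snd P) (snd p)"
      using c0 by (simp add: condP_def zero_less_divide_iff pmf_nonneg less_le)
    ultimately show ?thesis by (simp add: condP_def g_def field_simps)
  qed
  have kraft: "(\<Sum>\<^sub>\<infinity>p\<in>?D. ennreal (g p)) \<le> 1"
    unfolding g_def by (rule infsum_kraft_inequality_side_info[OF pf, where \<psi> = \<psi>]) blast
  have "ennreal (measure_pmf.prob P ?D) = (\<Sum>\<^sub>\<infinity>p\<in>?D. ennreal (pmf P p))"
    by (simp add: infsum_ennreal_pmf)
  also have "\<dots> \<le> (\<Sum>\<^sub>\<infinity>p\<in>?D. ennreal (2 powr (-\<kappa>)) * ennreal (g p))"
  proof (rule infsum_mono)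
    fix p assume "p \<in> ?D"
    then have "pmf P p \<le> 2 powr (-\<kappa>) * g p" using pmf_less less_imp_le by blast
    then show "ennreal (pmf P p) \<le> ennreal (2 powr (-\<kappa>)) * ennreal (g p)"
      by (subst ennreal_mult'[symmetric]) (simp_all add: ennreal_leI)
  qed simp_all
  also have "\<dots> = ennreal (2 powr (-\<kappa>)) * (\<Sum>\<^sub>\<infinity>p\<in>?D. ennreal (g p))"
    by (rule infsum_cmult_ennreal)
  also have "\<dots> \<le> ennreal (2 powr (-\<kappa>))" using kraft mult_left_mono[of _ 1] by fastforce
  finally show ?thesis by (simp add: ennreal_le_iff)
qed

lemma code_converse_oneshot:
  fixes P :: "('a list \<times> 'b list) pmf" and \<phi> :: "'a list \<Rightarrow> 'b list \<Rightarrow> bool list" and \<psi> and \<kappa> :: real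
  assumes pf: "\<And>y. prefix_free {\<phi> x y | x. (x, y) \<in> set_pmf P}" and \<kappa>: "0 \<le> \<kappa>"
  defines "A \<equiv> {p \<in> set_pmf P. \<psi> (\<phi> (fst p) (snd p)) (snd p) = fst p \<and>
      log 2 (1 / condP P p) \<le> real (length (\<phi> (fst p) (snd p))) + \<kappa>}"
  shows "1 - err_prob P \<phi> \<psi> - 2 powr (-\<kappa>) \<le> measure_pmf.prob P A"
    and "(\<Sum>\<^sub>\<infinity>p\<in>A. ennreal (cond_info_term P p)) \<le> exp_len P \<phi> + ennreal \<kappa>"
proof -
  define D where "D = {p \<in> set_pmf P. \<psi> (\<phi> (fst p) (snd p)) (snd p) = fst p \<and>
      real (length (\<phi> (fst p) (snd p))) + \<kappa> < log 2 (1 / condP P p)}"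
  define W where "W = {(x, y). \<psi> (\<phi> x y) y \<noteq> x}"
  have "1 = measure_pmf.prob P (set_pmf P)" by (simp add: measure_pmf.prob_eq_1 AE_measure_pmf)
  also have "\<dots> \<le> measure_pmf.prob P (A \<union> W \<union> D)"
    by (rule measure_pmf.finite_measure_mono) (auto simp: A_def D_def W_def not_le)
  also have "\<dots> \<le> measure_pmf.prob P A + measure_pmf.prob P W + measure_pmf.prob P D"
    using measure_Un_le[of A "measure_pmf P" W] measure_Un_le[of "A \<union> W" "measure_pmf P" D] by simp
  finally show "1 - err_prob P \<phi> \<psi> - 2 powr (-\<kappa>) \<le> measure_pmf.prob P A"
    using prob_short_codeword_le[OF pf, of \<psi> \<kappa>] by (simp add: err_prob_def W_def D_def)
next
  let ?l = "\<lambda>p. length (\<phi> (fst p) (snd p))"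
  have "(\<Sum>\<^sub>\<infinity>p\<in>A. ennreal (cond_info_term P p))
      \<le> (\<Sum>\<^sub>\<infinity>p\<in>A. ennreal (pmf P p) * of_nat (?l p) + ennreal \<kappa> * ennreal (pmf P p))"
  proof (rule infsum_mono)
    fix p assume "p \<in> A"
    then have "cond_info_term P p \<le> pmf P p * real (?l p) + \<kappa> * pmf P p"
      unfolding A_def cond_info_term_def
      using mult_left_mono[of "log 2 (1 / condP P p)" "real (?l p) + \<kappa>" "pmf P p"]
      by (simp add: algebra_simps)
    then show "ennreal (cond_info_term P p) \<le> ennreal (pmf P p) * of_nat (?l p) + ennreal \<kappa> * ennreal (pmf P p)"
      using \<kappa> by (simp add: ennreal_leI ennreal_plus[symmetric] ennreal_mult[symmetric]
          ennreal_of_nat_eq_real_of_nat del: ennreal_plus)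
  qed simp_all
  also have "\<dots> = (\<Sum>\<^sub>\<infinity>p\<in>A. ennreal (pmf P p) * of_nat (?l p)) + ennreal \<kappa> * (\<Sum>\<^sub>\<infinity>p\<in>A. ennreal (pmf P p))"
    by (simp add: infsum_add infsum_cmult_ennreal)
  also have "\<dots> \<le> exp_len P \<phi> + ennreal \<kappa> * 1"
  proof (rule add_mono)
    show "(\<Sum>\<^sub>\<infinity>p\<in>A. ennreal (pmf P p) * of_nat (?l p)) \<le> exp_len P \<phi>"
      unfolding exp_len_def by (rule infsum_mono_neutral) simp_all
    show "ennreal \<kappa> * (\<Sum>\<^sub>\<infinity>p\<in>A. ennreal (pmf P p)) \<le> ennreal \<kappa> * 1"
      by (intro mult_left_mono) (simp_all add: infsum_ennreal_pmf)
  qed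
  finally show "(\<Sum>\<^sub>\<infinity>p\<in>A. ennreal (cond_info_term P p)) \<le> exp_len P \<phi> + ennreal \<kappa>" by simp
qed

section \<open>Two-part codes and one-shot achievability\<close>

lemma inj_into_bitstrings:
  assumes "finite X" and "card X \<le> 2 ^ n"
  obtains f :: "'x \<Rightarrow> bool list" where "f ` X \<subseteq> {bs. length bs = n}" and "inj_on f X"
proof -
  have fin: "finite {bs :: bool list. length bs = n}" and card: "card {bs :: bool list. length bs = n} = 2 ^ n"
    using finite_lists_length_eq[of "UNIV :: bool set" n] card_lists_length_eq[of "UNIV :: bool set" n]
    by simp_all
  obtain f :: "'x \<Rightarrow> bool list" where "f ` X \<subseteq> {bs. length bs = n}" and "inj_on f X"
    using card_le_inj[OF assms(1) fin] assms(2) unfolding card by blast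
  then show ?thesis by (rule that)
qed

lemma inj_into_bitstrings_family:
  assumes "\<And>i. finite (X i)" and "\<And>i. card (X i) \<le> 2 ^ n i"
  obtains f :: "'i \<Rightarrow> 'x \<Rightarrow> bool list"
  where "\<And>i. f i ` X i \<subseteq> {bs. length bs = n i}" and "\<And>i. inj_on (f i) (X i)"
proof -
  have "\<exists>g :: 'x \<Rightarrow> bool list. g ` X i \<subseteq> {bs. length bs = n i} \<and> inj_on g (X i)" for i
    using inj_into_bitstrings[OF assms[of i]] by blast
  then have "\<exists>f. \<forall>i. f i ` X i \<subseteq> {bs :: bool list. length bs = n i} \<and> inj_on (f i) (X i)" by metis
  with that show thesis by blast
qed

lemma prefix_append_self_delimiting:
  assumes "length u = length u'" and "prefix (u @ v) (u' @ v')" and "u = u' \<Longrightarrow> length v = length v'"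
  shows "u = u'" and "v = v'"
proof -
  obtain zs where "u' @ v' = u @ (v @ zs)" using assms(2) by (auto simp: prefix_def)
  then have "u' = u" and v': "v' = v @ zs" using assms(1) by (simp_all add: append_eq_append_conv)
  then show "u = u'" and "v = v'" using assms(3) by simp_all
qed

lemma prefix_free_flagged:
  assumes "\<And>x x'. g x \<Longrightarrow> g x' \<Longrightarrow> prefix (c x) (c x') \<Longrightarrow> x = x'"
  shows "prefix_free {if g x then True # c x else [False] | x. True}"
  unfolding prefix_free_def
proof clarify
  fix x x' assume pre: "prefix (if g x then True # c x else [False]) (if g x' then True # c x' else [False])"
  show "(if g x then True # c x else [False]) = (if g x' then True # c x' else [False])"
  proof (cases "g x \<and> g x'")
    case True
    with pre have "x = x'" using assms by simp
    then show ?thesis by simp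
  qed (use pre in \<open>auto split: if_splits\<close>)
qed

text \<open>A two-part code: a flag bit, a fixed-length header naming the level \<open>k(x, y)\<close>, and an index
  of \<open>x\<close> within its level \<open>{x. k(x, y) = j}\<close> of size at most \<open>2\<^sup>j\<close>.\<close>

lemma two_part_code_exists:
  fixes G :: "('a \<times> 'b) set" and k :: "'a \<times> 'b \<Rightarrow> nat" and h :: nat
  assumes k: "\<And>p. p \<in> G \<Longrightarrow> k p < 2 ^ h"
    and fin: "\<And>y j. finite {x. (x, y) \<in> G \<and> k (x, y) = j}"
    and card: "\<And>y j. card {x. (x, y) \<in> G \<and> k (x, y) = j} \<le> 2 ^ j"
  obtains \<phi> :: "'a \<Rightarrow> 'b \<Rightarrow> bool list" and \<psi>
  where "\<And>y. prefix_free {\<phi> x y | x. True}"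
    and "\<And>x y. (x, y) \<in> G \<Longrightarrow> \<psi> (\<phi> x y) y = x"
    and "\<And>x y. (x, y) \<in> G \<Longrightarrow> length (\<phi> x y) = 1 + h + k (x, y)"
    and "\<And>x y. (x, y) \<notin> G \<Longrightarrow> length (\<phi> x y) = 1"
proof -
  define level where "level yj = {x. (x, fst yj) \<in> G \<and> k (x, fst yj) = snd yj}" for yj
  have "finite {..<(2::nat) ^ h}" and "card {..<(2::nat) ^ h} \<le> 2 ^ h" by simp_all
  then obtain header :: "nat \<Rightarrow> bool list"
    where header: "header ` {..<2 ^ h} \<subseteq> {bs. length bs = h}" "inj_on header {..<2 ^ h}"
    by (rule inj_into_bitstrings)
  obtain index :: "'b \<times> nat \<Rightarrow> 'a \<Rightarrow> bool list"
    where index: "\<And>yj. index yj ` level yj \<subseteq> {bs. length bs = snd yj}" "\<And>yj. inj_on (index yj) (level yj)"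
    using inj_into_bitstrings_family[of level snd] fin card by (auto simp: level_def)
  define code where "code y x = header (k (x, y)) @ index (y, k (x, y)) x" for y x
  define \<phi> where "\<phi> x y = (if (x, y) \<in> G then True # code y x else [False])" for x y
  define \<psi> where "\<psi> c y = (SOME x. (x, y) \<in> G \<and> \<phi> x y = c)" for c y
  have len_header: "length (header (k (x, y))) = h" and len_index: "length (index (y, k (x, y)) x) = k (x, y)"
    if "(x, y) \<in> G" for x y
    using header(1) index(1)[of "(y, k (x, y))"] k[OF that] that by (auto simp: level_def)
  have prefix_unique: "x = x'"
    if G: "(x, y) \<in> G" "(x', y) \<in> G" and pre: "prefix (code y x) (code y x')" for x x' y
  proof -
    have k_eq: "k (x, y) = k (x', y)" if "header (k (x, y)) = header (k (x', y))"
      using inj_onD[OF header(2) that] k G by simp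
    have len_eq: "length (index (y, k (x, y)) x) = length (index (y, k (x', y)) x')"
      if "header (k (x, y)) = header (k (x', y))"
      using k_eq[OF that] len_index[OF G(1)] len_index[OF G(2)] by simp
    have "length (header (k (x, y))) = length (header (k (x', y)))" using len_header G by simp
    note self_delimiting = prefix_append_self_delimiting[OF this pre[unfolded code_def] len_eq]
    then have "index (y, k (x, y)) x = index (y, k (x, y)) x'" and "k (x, y) = k (x', y)"
      using k_eq by simp_all
    moreover have "x \<in> level (y, k (x, y))" "x' \<in> level (y, k (x, y))"
      using G \<open>k (x, y) = k (x', y)\<close> by (simp_all add: level_def)
    ultimately show ?thesis using index(2) by (auto dest: inj_onD)
  qed
  show thesis
  proof
    show "prefix_free {\<phi> x y | x. True}" for y
      unfolding \<phi>_def using prefix_unique by (intro prefix_free_flagged) blast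
  next
    fix x y assume G: "(x, y) \<in> G"
    have "(\<psi> (\<phi> x y) y, y) \<in> G \<and> \<phi> (\<psi> (\<phi> x y) y) y = \<phi> x y"
      unfolding \<psi>_def by (rule someI[of _ x]) (use G in simp)
    then show "\<psi> (\<phi> x y) y = x" using prefix_unique[OF _ G] by (simp add: \<phi>_def split: if_splits)
    show "length (\<phi> x y) = 1 + h + k (x, y)" using G len_header len_index by (simp add: \<phi>_def code_def)
  next
    fix x y assume "(x, y) \<notin> G"
    then show "length (\<phi> x y) = 1" by (simp add: \<phi>_def)
  qed
qed

lemma finite_card_le_of_lower_bound:
  fixes q :: "'x \<Rightarrow> real"
  assumes c: "0 < c" and lower: "\<And>x. x \<in> C \<Longrightarrow> c \<le> q x"
    and upper: "\<And>F. finite F \<Longrightarrow> F \<subseteq> C \<Longrightarrow> sum q F \<le> c * K"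
  shows "finite C" and "card C \<le> K"
proof -
  have card_F: "card F \<le> K" if "finite F" "F \<subseteq> C" for F
  proof -
    have "c * card F = (\<Sum>x\<in>F. c)" by simp
    also have "\<dots> \<le> sum q F" by (rule sum_mono) (use lower that in auto)
    also have "\<dots> \<le> c * K" using upper that by simp
    finally show ?thesis using c by simp
  qed
  show "finite C"
  proof (rule ccontr)
    assume "infinite C"
    then obtain F where "finite F" "card F = Suc K" "F \<subseteq> C" using infinite_arbitrarily_large by blast
    with card_F show False by fastforce
  qed
  then show "card C \<le> K" using card_F by blast
qed

lemma markov_inequality_pmf:
  fixes f :: "'x \<Rightarrow> real"
  assumes "0 < c" and "\<And>p. p \<in> S \<Longrightarrow> 0 \<le> f p"
  shows "ennreal (c * measure_pmf.prob P {p \<in> S. c \<le> f p}) \<le> (\<Sum>\<^sub>\<infinity>p\<in>S. ennreal (pmf P p * f p))"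
proof -
  have "ennreal (c * measure_pmf.prob P {p \<in> S. c \<le> f p}) = (\<Sum>\<^sub>\<infinity>p\<in>{p \<in> S. c \<le> f p}. ennreal c * ennreal (pmf P p))"
    using assms(1) by (simp add: infsum_ennreal_pmf infsum_cmult_ennreal ennreal_mult)
  also have "\<dots> \<le> (\<Sum>\<^sub>\<infinity>p\<in>{p \<in> S. c \<le> f p}. ennreal (pmf P p * f p))"
  proof (rule infsum_mono)
    fix p assume "p \<in> {p \<in> S. c \<le> f p}"
    then have "c * pmf P p \<le> pmf P p * f p"
      using mult_right_mono[of c "f p" "pmf P p"] by (simp add: mult.commute)
    then show "ennreal c * ennreal (pmf P p) \<le> ennreal (pmf P p * f p)"
      using assms(1) by (simp add: ennreal_mult[symmetric] ennreal_leI)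
  qed simp_all
  also have "\<dots> \<le> (\<Sum>\<^sub>\<infinity>p\<in>S. ennreal (pmf P p * f p))"
    by (rule infsum_mono_neutral) auto
  finally show ?thesis .
qed

lemma exp_len_le_pointwise:
  fixes P :: "('a list \<times> 'b list) pmf" and f :: "'a list \<times> 'b list \<Rightarrow> real"
  assumes "0 \<le> a" and "0 \<le> B" and f0: "\<And>p. p \<in> S \<Longrightarrow> 0 \<le> f p"
    and f: "(\<Sum>\<^sub>\<infinity>p\<in>S. ennreal (pmf P p * f p)) \<le> ennreal B"
    and len: "\<And>p. p \<in> set_pmf P \<Longrightarrow> real (length (\<phi> (fst p) (snd p))) \<le> a + (if p \<in> S then f p else 0)"
  shows "exp_len P \<phi> \<le> ennreal (B + a)"
proof -
  define g where "g p = (if p \<in> S then f p else 0)" for p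
  have g0: "0 \<le> g p" for p using f0 by (simp add: g_def)
  have "exp_len P \<phi> \<le> (\<Sum>\<^sub>\<infinity>p. ennreal a * ennreal (pmf P p) + ennreal (pmf P p * g p))"
    unfolding exp_len_def
  proof (rule infsum_mono)
    fix p :: "'a list \<times> 'b list"
    show "ennreal (pmf P p) * of_nat (length (\<phi> (fst p) (snd p))) \<le> ennreal a * ennreal (pmf P p) + ennreal (pmf P p * g p)"
    proof (cases "p \<in> set_pmf P")
      case True
      have "pmf P p * real (length (\<phi> (fst p) (snd p))) \<le> a * pmf P p + pmf P p * g p"
        using mult_left_mono[OF len[OF True] pmf_nonneg[of P p]] by (simp add: g_def algebra_simps)
      then show ?thesis
        using assms(1) g0[of p] by (simp add: ennreal_leI ennreal_of_nat_eq_real_of_nat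
            ennreal_mult[symmetric] ennreal_plus[symmetric] del: ennreal_plus)
    qed (simp add: set_pmf_eq)
  qed simp_all
  also have "\<dots> = ennreal a * (\<Sum>\<^sub>\<infinity>p. ennreal (pmf P p)) + (\<Sum>\<^sub>\<infinity>p. ennreal (pmf P p * g p))"
    by (simp add: infsum_add infsum_cmult_ennreal)
  also have "(\<Sum>\<^sub>\<infinity>p. ennreal (pmf P p * g p)) = (\<Sum>\<^sub>\<infinity>p\<in>S. ennreal (pmf P p * f p))"
    by (rule infsum_cong_neutral) (auto simp: g_def)
  also have "ennreal a * (\<Sum>\<^sub>\<infinity>p. ennreal (pmf P p)) = ennreal a"
    by (simp add: infsum_ennreal_pmf)
  also have "ennreal a + (\<Sum>\<^sub>\<infinity>p\<in>S. ennreal (pmf P p * f p)) \<le> ennreal a + ennreal B"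
    using f by (rule add_left_mono)
  finally show ?thesis using assms(1,2) by (simp add: ennreal_plus add.commute)
qed

lemma cond_ratio_level_finite_card:
  fixes P :: "('a \<times> 'b) pmf" and A and y and j :: nat
  defines "L \<equiv> {x. (x, y) \<in> A \<inter> set_pmf P \<and> nat \<lceil>log 2 (cond_ratio P A (x, y))\<rceil> \<le> j}"
  shows "finite L" and "card L \<le> 2 ^ j"
proof -
  define M where "M = measure_pmf.prob P (A \<inter> snd -` {y})"
  have pmf_bounds: "0 < pmf P (x, y) \<and> M / 2 ^ j \<le> pmf P (x, y) \<and> pmf P (x, y) \<le> M" if "x \<in> L" for x
  proof -
    have pos: "0 < pmf P (x, y)" using that by (simp add: L_def pmf_positive)
    have "1 \<le> cond_ratio P A (x, y)" using that cond_ratio_ge_1[of "(x, y)" A P] by (simp add: L_def)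
    moreover have "log 2 (cond_ratio P A (x, y)) \<le> j" using that by (simp add: L_def nat_le_iff ceiling_le_iff)
    ultimately have "cond_ratio P A (x, y) \<le> 2 ^ j" by (simp add: log_le_iff powr_realpow)
    with \<open>1 \<le> cond_ratio P A (x, y)\<close> pos show ?thesis by (simp add: cond_ratio_def M_def field_simps)
  qed
  have mass: "(\<Sum>x\<in>F. pmf P (x, y)) \<le> M / 2 ^ j * 2 ^ j" if "finite F" "F \<subseteq> L" for F
  proof -
    have "(\<Sum>x\<in>F. pmf P (x, y)) = measure_pmf.prob P ((\<lambda>x. (x, y)) ` F)"
      using that(1) by (simp add: measure_measure_pmf_finite sum.reindex inj_on_def)
    also have "\<dots> \<le> M" unfolding M_def
      using that(2) by (intro measure_pmf.finite_measure_mono) (auto simp: L_def)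
    finally show ?thesis by simp
  qed
  have "finite L \<and> card L \<le> 2 ^ j"
  proof (cases "L = {}")
    case False
    then have "0 < M" using pmf_bounds by force
    then show ?thesis
      using finite_card_le_of_lower_bound[of "M / 2 ^ j" L "\<lambda>x. pmf P (x, y)" "2 ^ j"] pmf_bounds mass
      by simp
  qed simp
  then show "finite L" and "card L \<le> 2 ^ j" by simp_all
qed

lemma prob_cond_ratio_level_ge_le:
  assumes m: "0 < measure_pmf.prob P A" and B0: "0 \<le> B" and c: "0 < c"
    and HB: "ennreal (measure_pmf.prob P A) * H_A P A \<le> ennreal B"
  shows "measure_pmf.prob P {p \<in> A \<inter> set_pmf P. c \<le> nat \<lceil>log 2 (cond_ratio P A p)\<rceil>} \<le> (B + 1) / c"
proof -
  let ?S = "A \<inter> set_pmf P" and ?r = "cond_ratio P A"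
  have log_r: "0 \<le> log 2 (?r p)" if "p \<in> ?S" for p using that cond_ratio_ge_1[of p A P] by simp
  have "{p \<in> ?S. c \<le> nat \<lceil>log 2 (?r p)\<rceil>} \<subseteq> {p \<in> ?S. real c \<le> log 2 (?r p) + 1}"
  proof
    fix p assume p: "p \<in> {p \<in> ?S. c \<le> nat \<lceil>log 2 (?r p)\<rceil>}"
    then have "real c \<le> real (nat \<lceil>log 2 (?r p)\<rceil>)" by simp
    also have "\<dots> \<le> log 2 (?r p) + 1"
      using log_r[of p] p of_int_ceiling_le_add_one[of "log 2 (?r p)"] by simp
    finally show "p \<in> {p \<in> ?S. real c \<le> log 2 (?r p) + 1}" using p by simp
  qed
  then have "ennreal (c * measure_pmf.prob P {p \<in> ?S. c \<le> nat \<lceil>log 2 (?r p)\<rceil>})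
      \<le> ennreal (c * measure_pmf.prob P {p \<in> ?S. real c \<le> log 2 (?r p) + 1})"
    by (intro ennreal_leI mult_left_mono measure_pmf.finite_measure_mono) simp_all
  also have "ennreal (c * measure_pmf.prob P {p \<in> ?S. real c \<le> log 2 (?r p) + 1})
      \<le> (\<Sum>\<^sub>\<infinity>p\<in>?S. ennreal (pmf P p * (log 2 (?r p) + 1)))"
  proof (rule markov_inequality_pmf)
    show "0 \<le> log 2 (?r p) + 1" if "p \<in> ?S" for p using log_r[OF that] by simp
  qed (use c in simp)
  also have "\<dots> = (\<Sum>\<^sub>\<infinity>p\<in>?S. ennreal (pmf P p * log 2 (?r p)) + ennreal (pmf P p))"
    by (rule infsum_cong) (simp add: distrib_left ennreal_plus log_r)
  also have "\<dots> = ennreal (measure_pmf.prob P A) * H_A P A + (\<Sum>\<^sub>\<infinity>p\<in>?S. ennreal (pmf P p))"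
    by (subst infsum_add) (simp_all add: prob_mult_H_A_eq[OF m])
  also have "\<dots> \<le> ennreal (B + 1)"
    using HB B0 by (simp add: infsum_ennreal_pmf ennreal_plus add_mono)
  finally have "c * measure_pmf.prob P {p \<in> ?S. c \<le> nat \<lceil>log 2 (?r p)\<rceil>} \<le> B + 1"
    using B0 by (subst (asm) ennreal_le_iff) simp_all
  then show ?thesis using c by (simp add: field_simps)
qed

lemma err_prob_le_of_decodes:
  assumes "\<And>x y. (x, y) \<in> G \<Longrightarrow> \<psi> (\<phi> x y) y = x"
  shows "err_prob P \<phi> \<psi> \<le> 1 - measure_pmf.prob P G"
proof -
  have "err_prob P \<phi> \<psi> \<le> measure_pmf.prob P (- G)"
    unfolding err_prob_def using assms by (intro measure_pmf.finite_measure_mono) auto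
  then show ?thesis using measure_pmf.prob_compl[of G P] by (simp add: Compl_eq_Diff_UNIV)
qed

text \<open>Pairs whose level \<open>\<lceil>log (cond_ratio P A p)\<rceil>\<close> does not fit into the \<open>h\<close>-bit header are not
  decoded; by Markov's inequality they have probability at most \<open>(B + 1) / 2\<^sup>h\<close>.\<close>

lemma code_achievability_oneshot:
  fixes P :: "('a list \<times> 'b list) pmf" and B :: real and h :: nat
  assumes m: "0 < measure_pmf.prob P A" and B0: "0 \<le> B"
    and HB: "ennreal (measure_pmf.prob P A) * H_A P A \<le> ennreal B"
  obtains \<phi> :: "'a list \<Rightarrow> 'b list \<Rightarrow> bool list" and \<psi>
  where "\<And>y. prefix_free {\<phi> x y | x. True}"
    and "err_prob P \<phi> \<psi> \<le> 1 - measure_pmf.prob P A + (B + 1) / 2 ^ h"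
    and "exp_len P \<phi> \<le> ennreal (B + real h + 2)"
proof -
  define S where "S = A \<inter> set_pmf P"
  define r where "r = cond_ratio P A"
  define k where "k p = nat \<lceil>log 2 (r p)\<rceil>" for p
  define G where "G = {p \<in> S. k p < 2 ^ h}"
  have log_r: "0 \<le> log 2 (r p)" if "p \<in> S" for p using that cond_ratio_ge_1[of p A P] by (simp add: S_def r_def)
  have k_le: "real (k p) \<le> log 2 (r p) + 1" if "p \<in> S" for p
    using log_r[OF that] of_int_ceiling_le_add_one[of "log 2 (r p)"] by (simp add: k_def)
  have level: "finite {x. (x, y) \<in> G \<and> k (x, y) = j} \<and> card {x. (x, y) \<in> G \<and> k (x, y) = j} \<le> 2 ^ j"
    for y j
  proof -
    have sub: "{x. (x, y) \<in> G \<and> k (x, y) = j}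
        \<subseteq> {x. (x, y) \<in> A \<inter> set_pmf P \<and> nat \<lceil>log 2 (cond_ratio P A (x, y))\<rceil> \<le> j}"
    proof (intro subsetI CollectI)
      fix x assume x: "x \<in> {x. (x, y) \<in> G \<and> k (x, y) = j}"
      then have "(x, y) \<in> A \<inter> set_pmf P" by (simp add: G_def S_def)
      moreover have "nat \<lceil>log 2 (cond_ratio P A (x, y))\<rceil> = j" using x by (simp add: k_def r_def)
      ultimately show "(x, y) \<in> A \<inter> set_pmf P \<and> nat \<lceil>log 2 (cond_ratio P A (x, y))\<rceil> \<le> j" by simp
    qed
    note L = cond_ratio_level_finite_card[of y A P j]
    show ?thesis using finite_subset[OF sub L(1)] card_mono[OF L(1) sub] L(2) by simp
  qed
  obtain \<phi> \<psi> where pf: "\<And>y. prefix_free {\<phi> x y | x. True}"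
    and dec: "\<And>x y. (x, y) \<in> G \<Longrightarrow> \<psi> (\<phi> x y) y = x"
    and len_G: "\<And>x y. (x, y) \<in> G \<Longrightarrow> length (\<phi> x y) = 1 + h + k (x, y)"
    and len_not_G: "\<And>x y. (x, y) \<notin> G \<Longrightarrow> length (\<phi> x y) = 1"
    using two_part_code_exists[of G k h] level by (auto simp: G_def)
  show thesis
  proof (rule that[OF pf])
    have "S - G = {p \<in> A \<inter> set_pmf P. 2 ^ h \<le> nat \<lceil>log 2 (cond_ratio P A p)\<rceil>}"
      by (auto simp: S_def G_def k_def r_def not_less)
    then have "measure_pmf.prob P (S - G) \<le> (B + 1) / 2 ^ h"
      using prob_cond_ratio_level_ge_le[OF m B0 _ HB, of "2 ^ h"] by simp
    moreover have "measure_pmf.prob P (S - G) = measure_pmf.prob P S - measure_pmf.prob P G"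
      by (rule measure_pmf.finite_measure_Diff) (auto simp: G_def)
    moreover have "measure_pmf.prob P S = measure_pmf.prob P A"
      unfolding S_def by (rule measure_Int_set_pmf)
    ultimately show "err_prob P \<phi> \<psi> \<le> 1 - measure_pmf.prob P A + (B + 1) / 2 ^ h"
      using err_prob_le_of_decodes[where G = G and \<phi> = \<phi> and \<psi> = \<psi> and P = P, OF dec] by simp
  next
    have "exp_len P \<phi> \<le> ennreal (B + (real h + 2))"
    proof (rule exp_len_le_pointwise[OF _ B0 log_r])
      show "(\<Sum>\<^sub>\<infinity>p\<in>S. ennreal (pmf P p * log 2 (r p))) \<le> ennreal B"
        using HB prob_mult_H_A_eq[OF m] by (simp add: S_def r_def)
      show "real (length (\<phi> (fst p) (snd p))) \<le> real h + 2 + (if p \<in> S then log 2 (r p) else 0)" for p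
        using len_G[of "fst p" "snd p"] len_not_G[of "fst p" "snd p"] k_le[of p] log_r[of p]
        by (cases "p \<in> G") (auto simp: G_def)
    qed simp
    then show "exp_len P \<phi> \<le> ennreal (B + real h + 2)" by (simp add: add.assoc)
  qed
qed

section \<open>The asymptotic converse\<close>

lemma prefix_free_of_valid_code:
  fixes P :: "nat \<Rightarrow> ('a::countable list \<times> 'b::countable list) pmf"
  assumes "general_source P" and "valid_code n \<phi>"
  shows "prefix_free {\<phi> x y | x. (x, y) \<in> set_pmf (P n)}"
proof (cases "length y = n")
  case True
  have "{\<phi> x y | x. (x, y) \<in> set_pmf (P n)} \<subseteq> {\<phi> x y | x. length x = n}"
    using assms(1) unfolding general_source_def by blast
  moreover have "prefix_free {\<phi> x y | x. length x = n}"
    using assms(2) True unfolding valid_code_def by blast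
  ultimately show ?thesis using prefix_free_subset by blast
next
  case False
  then have "{\<phi> x y | x. (x, y) \<in> set_pmf (P n)} = {}"
    using assms(1) unfolding general_source_def by blast
  then show ?thesis unfolding prefix_free_def by simp
qed

lemma limsup_scaled_le_of_eventually_le_add_const:
  fixes X Y :: "nat \<Rightarrow> ennreal" and c :: real
  assumes "eventually (\<lambda>n. X n \<le> Y n + ennreal c) sequentially"
  shows "limsup (\<lambda>n. ennreal (1 / real n) * X n) \<le> limsup (\<lambda>n. ennreal (1 / real n) * Y n)"
proof (rule ennreal_le_epsilon)
  fix d :: real assume d: "0 < d"
  have "((\<lambda>n. c / real n) \<longlongrightarrow> 0) sequentially"
    by (intro tendsto_divide_0[OF tendsto_const] filterlim_at_top_imp_at_infinity filterlim_real_sequentially)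
  then have "eventually (\<lambda>n. c / real n < d) sequentially"
    using d by (rule order_tendstoD(2))
  then have "eventually (\<lambda>n. ennreal (1 / real n) * X n \<le> ennreal (1 / real n) * Y n + ennreal d) sequentially"
    using assms
  proof eventually_elim
    case (elim n)
    have "ennreal (1 / real n) * X n \<le> ennreal (1 / real n) * Y n + ennreal (1 / real n) * ennreal c"
      using mult_left_mono[OF elim(2), of "ennreal (1 / real n)"] by (simp add: distrib_left)
    also have "ennreal (1 / real n) * ennreal c \<le> ennreal d"
    proof (cases "0 \<le> c")
      case True
      then show ?thesis using elim(1) by (simp add: ennreal_mult[symmetric] ennreal_leI)
    qed (simp add: ennreal_neg)
    finally show ?case by (simp add: add_left_mono)
  qed
  then have "limsup (\<lambda>n. ennreal (1 / real n) * X n) \<le> limsup (\<lambda>n. ennreal (1 / real n) * Y n + ennreal d)"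
    by (rule Limsup_mono)
  then show "limsup (\<lambda>n. ennreal (1 / real n) * X n) \<le> limsup (\<lambda>n. ennreal (1 / real n) * Y n) + ennreal d"
    using Limsup_const_add[of sequentially "ennreal d" "\<lambda>n. ennreal (1 / real n) * Y n"]
    by (simp add: add.commute)
qed

text \<open>\<open>\<kappa> = log (2/\<delta>)\<close> makes \<open>2\<^sup>-\<^sup>\<kappa> = \<delta>/2\<close> absorb the excess error; as a constant it disappears
  after division by \<open>n\<close>.\<close>

lemma achievable_converse:
  fixes P :: "nat \<Rightarrow> ('a::countable list \<times> 'b::countable list) pmf"
  assumes gs: "general_source P" and ach: "achievable P \<epsilon> R"
    and \<delta>: "0 < \<delta>" "\<delta> < 1" and \<epsilon>: "0 \<le> \<epsilon>"
  obtains \<phi> where "limsup (\<lambda>n. ennreal (1 / real n) * exp_len (P n) (\<phi> n)) \<le> R"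
    and "eventually (\<lambda>n. \<exists>A. 1 - (\<epsilon> + \<delta>) \<le> measure_pmf.prob (P n) A \<and>
        (\<Sum>\<^sub>\<infinity>p\<in>A. ennreal (cond_info_term (P n) p)) \<le> exp_len (P n) (\<phi> n) + ennreal (log 2 (2 / \<delta>)))
        sequentially"
proof -
  obtain \<phi> \<psi> where valid: "\<forall>n. valid_code n (\<phi> n)"
    and err: "limsup (\<lambda>n. ennreal (err_prob (P n) (\<phi> n) (\<psi> n))) \<le> ennreal \<epsilon>"
    and rate: "limsup (\<lambda>n. ennreal (1 / real n) * exp_len (P n) (\<phi> n)) \<le> R"
    using ach unfolding achievable_def by blast
  define \<kappa> where "\<kappa> = log 2 (2 / \<delta>)"
  have \<kappa>0: "0 \<le> \<kappa>" and \<kappa>: "2 powr (-\<kappa>) = \<delta> / 2"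
    using \<delta> by (simp_all add: \<kappa>_def powr_minus)
  have "limsup (\<lambda>n. ennreal (err_prob (P n) (\<phi> n) (\<psi> n))) < ennreal (\<epsilon> + \<delta> / 2)"
    using err \<delta> \<epsilon> by (simp add: ennreal_less_iff le_less_trans)
  then have "eventually (\<lambda>n. ennreal (err_prob (P n) (\<phi> n) (\<psi> n)) < ennreal (\<epsilon> + \<delta> / 2)) sequentially"
    by (rule Limsup_lessD)
  then have "eventually (\<lambda>n. \<exists>A. 1 - (\<epsilon> + \<delta>) \<le> measure_pmf.prob (P n) A \<and>
      (\<Sum>\<^sub>\<infinity>p\<in>A. ennreal (cond_info_term (P n) p)) \<le> exp_len (P n) (\<phi> n) + ennreal \<kappa>) sequentially"
  proof eventually_elim
    case (elim n)
    then have "err_prob (P n) (\<phi> n) (\<psi> n) < \<epsilon> + \<delta> / 2"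
      by (simp add: ennreal_less_iff err_prob_def)
    moreover note oneshot = code_converse_oneshot[OF prefix_free_of_valid_code[OF gs valid[rule_format, of n]]
        \<kappa>0, where \<psi> = "\<psi> n"]
    ultimately show ?case using \<kappa> by (intro exI conjI) auto
  qed
  then show ?thesis using that rate unfolding \<kappa>_def by blast
qed

lemma limsup_Htilde_eps_le_R_com:
  fixes P :: "nat \<Rightarrow> ('a::countable list \<times> 'b::countable list) pmf"
  assumes "general_source P" and "0 \<le> \<epsilon>" and "0 < \<delta>" and "\<epsilon> + \<delta> < 1"
  shows "limsup (\<lambda>n. ennreal (1 / real n) * Htilde_eps (P n) (\<epsilon> + \<delta>)) \<le> R_com P \<epsilon>"
  unfolding R_com_def
proof (rule Inf_greatest, clarify)
  fix R assume ach: "achievable P \<epsilon> R"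
  have "\<delta> < 1" using assms by simp
  then obtain \<phi> where rate: "limsup (\<lambda>n. ennreal (1 / real n) * exp_len (P n) (\<phi> n)) \<le> R"
    and ev: "eventually (\<lambda>n. \<exists>A. 1 - (\<epsilon> + \<delta>) \<le> measure_pmf.prob (P n) A \<and>
        (\<Sum>\<^sub>\<infinity>p\<in>A. ennreal (cond_info_term (P n) p)) \<le> exp_len (P n) (\<phi> n) + ennreal (log 2 (2 / \<delta>)))
        sequentially"
    by (rule achievable_converse[OF assms(1) ach assms(3) _ assms(2)])
  from ev have bound: "eventually (\<lambda>n. Htilde_eps (P n) (\<epsilon> + \<delta>) \<le> exp_len (P n) (\<phi> n) + ennreal (log 2 (2 / \<delta>)))
      sequentially"
  proof eventually_elim
    case (elim n)
    then show ?case using Htilde_eps_le_infsum order_trans by fast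
  qed
  show "limsup (\<lambda>n. ennreal (1 / real n) * Htilde_eps (P n) (\<epsilon> + \<delta>)) \<le> R"
    using limsup_scaled_le_of_eventually_le_add_const[OF bound] rate by (rule order_trans)
qed

lemma limsup_Hhat_eps_le_R_com:
  fixes P :: "nat \<Rightarrow> ('a::countable list \<times> 'b::countable list) pmf"
  assumes "general_source P" and "0 \<le> \<epsilon>" and "0 < \<delta>" and "\<epsilon> + \<delta> < 1"
    and e: "\<And>n. sorted_enum (P n) (e n)"
  shows "limsup (\<lambda>n. ennreal (1 / real n) * Hhat_eps (P n) (e n) (\<epsilon> + \<delta>)) \<le> R_com P \<epsilon>"
  unfolding R_com_def
proof (rule Inf_greatest, clarify)
  fix R assume ach: "achievable P \<epsilon> R"
  have "\<delta> < 1" using assms by simp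
  then obtain \<phi> where rate: "limsup (\<lambda>n. ennreal (1 / real n) * exp_len (P n) (\<phi> n)) \<le> R"
    and ev: "eventually (\<lambda>n. \<exists>A. 1 - (\<epsilon> + \<delta>) \<le> measure_pmf.prob (P n) A \<and>
        (\<Sum>\<^sub>\<infinity>p\<in>A. ennreal (cond_info_term (P n) p)) \<le> exp_len (P n) (\<phi> n) + ennreal (log 2 (2 / \<delta>)))
        sequentially"
    by (rule achievable_converse[OF assms(1) ach assms(3) _ assms(2)])
  have \<kappa>0: "0 \<le> log 2 (2 / \<delta>)" using assms by simp
  from ev have bound: "eventually (\<lambda>n. Hhat_eps (P n) (e n) (\<epsilon> + \<delta>)
      \<le> exp_len (P n) (\<phi> n) + ennreal (log 2 (2 / \<delta>) + 2)) sequentially"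
  proof eventually_elim
    case (elim n)
    then obtain A where A: "1 - (\<epsilon> + \<delta>) \<le> measure_pmf.prob (P n) A"
      "(\<Sum>\<^sub>\<infinity>p\<in>A. ennreal (cond_info_term (P n) p)) \<le> exp_len (P n) (\<phi> n) + ennreal (log 2 (2 / \<delta>))"
      by blast
    have "Hhat_eps (P n) (e n) (\<epsilon> + \<delta>) \<le> (\<Sum>\<^sub>\<infinity>p\<in>A. ennreal (cond_info_term (P n) p)) + 2"
      using Hhat_eps_le_infsum[OF e] A(1) assms(2,3) by simp
    also have "\<dots> \<le> exp_len (P n) (\<phi> n) + ennreal (log 2 (2 / \<delta>) + 2)"
      using add_right_mono[OF A(2), of 2] \<kappa>0 by (simp add: ennreal_plus add.assoc)
    finally show ?case .
  qed
  show "limsup (\<lambda>n. ennreal (1 / real n) * Hhat_eps (P n) (e n) (\<epsilon> + \<delta>)) \<le> R"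
    using limsup_scaled_le_of_eventually_le_add_const[OF bound] rate by (rule order_trans)
qed

section \<open>Asymptotic achievability\<close>

lemma code_of_H_eps_less:
  fixes P :: "('a list \<times> 'b list) pmf"
  assumes "H_eps P \<gamma> < ennreal B"
  obtains \<phi> :: "'a list \<Rightarrow> 'b list \<Rightarrow> bool list" and \<psi>
  where "\<And>y. prefix_free {\<phi> x y | x. True}"
    and "err_prob P \<phi> \<psi> \<le> \<gamma> + (B + 1) / 2 ^ h"
    and "exp_len P \<phi> \<le> ennreal (B + real h + 2)"
proof -
  obtain A where A: "0 < measure_pmf.prob P A" "1 - \<gamma> \<le> measure_pmf.prob P A"
    "ennreal (measure_pmf.prob P A) * H_A P A < ennreal B"
    using assms unfolding H_eps_def by (auto simp: INF_less_iff)
  have B0: "0 \<le> B"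
  proof (rule ccontr)
    assume "\<not> 0 \<le> B"
    then have "ennreal B = 0" by (simp add: ennreal_neg)
    with A(3) show False by simp
  qed
  obtain \<phi> \<psi> where pf: "\<And>y. prefix_free {\<phi> x y | x. True}"
    and err: "err_prob P \<phi> \<psi> \<le> 1 - measure_pmf.prob P A + (B + 1) / 2 ^ h"
    and len: "exp_len P \<phi> \<le> ennreal (B + real h + 2)"
    by (rule code_achievability_oneshot[OF A(1) B0 less_imp_le[OF A(3)], where h = h]) blast
  from err A(2) have "err_prob P \<phi> \<psi> \<le> \<gamma> + (B + 1) / 2 ^ h" by simp
  then show thesis by (rule that[OF pf _ len])
qed

lemma eventually_diagonal:
  assumes "\<And>m. eventually (Q m) sequentially"
  obtains \<mu> :: "nat \<Rightarrow> nat"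
  where "\<And>m. eventually (\<lambda>n. m \<le> \<mu> n) sequentially" and "eventually (\<lambda>n. Q (\<mu> n) n) sequentially"
proof -
  have "\<forall>m. \<exists>N. \<forall>n\<ge>N. Q m n" using assms by (simp add: eventually_sequentially)
  then obtain N where N: "\<And>m n. N m \<le> n \<Longrightarrow> Q m n" by metis
  define \<mu> where "\<mu> n = Max {m. N m + m \<le> n}" for n
  have fin: "finite {m. N m + m \<le> n}" for n
    by (rule finite_subset[of _ "{..n}"]) auto
  have ge: "m \<le> \<mu> n" if "N m + m \<le> n" for m n
    unfolding \<mu>_def using fin that by (intro Max_ge) auto
  show thesis
  proof
    show "eventually (\<lambda>n. m \<le> \<mu> n) sequentially" for m
      using ge by (auto simp: eventually_sequentially)
    show "eventually (\<lambda>n. Q (\<mu> n) n) sequentially"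
      unfolding eventually_sequentially
    proof (intro exI allI impI)
      fix n assume "N 0 + 0 \<le> n"
      then have "0 \<in> {m. N m + m \<le> n}" by simp
      then have "\<mu> n \<in> {m. N m + m \<le> n}" unfolding \<mu>_def by (intro Max_in fin) blast
      then show "Q (\<mu> n) n" using N by simp
    qed
  qed
qed

definition header_len :: "nat \<Rightarrow> nat" where
  "header_len n = nat \<lceil>2 * log 2 (real n + 1)\<rceil>"

lemma real_header_len: "real (header_len n) = of_int \<lceil>2 * log 2 (real n + 1)\<rceil>"
proof -
  have "0 \<le> 2 * log 2 (real n + 1)" by simp
  then show ?thesis unfolding header_len_def by linarith
qed

lemma square_le_two_pow_header_len: "(real n + 1) ^ 2 \<le> 2 ^ header_len n"
proof -
  have "(real n + 1) ^ 2 = 2 powr log 2 (real n + 1) * 2 powr log 2 (real n + 1)"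
    by (simp add: power2_eq_square)
  also have "\<dots> = 2 powr (2 * log 2 (real n + 1))"
    by (simp only: powr_add[symmetric] mult_2)
  also have "\<dots> \<le> 2 powr real (header_len n)"
    unfolding real_header_len by (intro powr_mono) simp_all
  finally show ?thesis by (simp add: powr_realpow)
qed

lemma header_len_le: "real (header_len n) \<le> 2 * log 2 (real n + 1) + 1"
  unfolding real_header_len by linarith

lemma header_len_overhead_tendsto_0: "(\<lambda>n. (real (header_len n) + 2) / real n) \<longlonglongrightarrow> 0"
proof (rule tendsto_sandwich)
  show "eventually (\<lambda>n. 0 \<le> (real (header_len n) + 2) / real n) sequentially" by simp
  show "eventually (\<lambda>n. (real (header_len n) + 2) / real n \<le> (2 * log 2 (real n + 1) + 3) / real n) sequentially"
  proof (intro always_eventually allI divide_right_mono)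
    show "real (header_len n) + 2 \<le> 2 * log 2 (real n + 1) + 3" for n
      using header_len_le[of n] by linarith
  qed simp
  have "(\<lambda>n::nat. (2 * ln (real n + 1) / ln 2 + 3) / real n) \<longlonglongrightarrow> 0" by real_asymp
  then show "(\<lambda>n. (2 * log 2 (real n + 1) + 3) / real n) \<longlonglongrightarrow> 0" by (simp add: log_def)
qed simp

lemma header_len_error_tendsto_0: "(\<lambda>n. (real n * c + 1) / 2 ^ header_len n) \<longlonglongrightarrow> 0"
proof (rule tendsto_sandwich)
  have bound: "\<bar>(real n * c + 1) / 2 ^ header_len n\<bar> \<le> (\<bar>c\<bar> + 1) / (real n + 1)" for n
  proof -
    have "\<bar>real n * c + 1\<bar> \<le> (\<bar>c\<bar> + 1) * (real n + 1)"
      by (simp add: abs_mult algebra_simps add_mono abs_triangle_ineq[THEN order_trans])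
    then have "\<bar>(real n * c + 1) / 2 ^ header_len n\<bar> \<le> (\<bar>c\<bar> + 1) * (real n + 1) / (real n + 1) ^ 2"
      using square_le_two_pow_header_len[of n] by (simp add: abs_divide frac_le)
    also have "\<dots> = (\<bar>c\<bar> + 1) / (real n + 1)" by (simp add: power2_eq_square)
    finally show ?thesis .
  qed
  have "- ((\<bar>c\<bar> + 1) / (real n + 1)) \<le> (real n * c + 1) / 2 ^ header_len n"
    and "(real n * c + 1) / 2 ^ header_len n \<le> (\<bar>c\<bar> + 1) / (real n + 1)" for n
    using bound[of n] unfolding abs_le_iff by linarith+
  then show "eventually (\<lambda>n. - ((\<bar>c\<bar> + 1) / (real n + 1)) \<le> (real n * c + 1) / 2 ^ header_len n) sequentially"
    and "eventually (\<lambda>n. (real n * c + 1) / 2 ^ header_len n \<le> (\<bar>c\<bar> + 1) / (real n + 1)) sequentially"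
    by (simp_all add: always_eventually)
  have "(\<lambda>n. (\<bar>c\<bar> + 1) / (real n + 1)) \<longlonglongrightarrow> 0" by real_asymp
  then show "(\<lambda>n. - ((\<bar>c\<bar> + 1) / (real n + 1))) \<longlonglongrightarrow> 0" and "(\<lambda>n. (\<bar>c\<bar> + 1) / (real n + 1)) \<longlonglongrightarrow> 0"
    using tendsto_minus by force+
qed

lemma eventually_less_of_limsup_scaled_less:
  fixes X :: "nat \<Rightarrow> ennreal"
  assumes "limsup (\<lambda>n. ennreal (1 / real n) * X n) < ennreal c" and c: "0 \<le> c"
  shows "eventually (\<lambda>n. X n < ennreal (real n * c)) sequentially"
proof -
  have "eventually (\<lambda>n. ennreal (1 / real n) * X n < ennreal c) sequentially"
    using assms(1) by (rule Limsup_lessD)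
  then show ?thesis using eventually_gt_at_top[of 0]
  proof eventually_elim
    case (elim n)
    show ?case
    proof (rule ccontr)
      assume "\<not> X n < ennreal (real n * c)"
      then have "ennreal (1 / real n) * ennreal (real n * c) \<le> ennreal (1 / real n) * X n"
        by (intro mult_left_mono) simp_all
      moreover have "ennreal (1 / real n) * ennreal (real n * c) = ennreal c"
        using elim(2) c by (simp add: ennreal_mult[symmetric])
      ultimately show False using elim(1) by simp
    qed
  qed
qed

lemma code_sequence_of_H_eps_less:
  fixes P :: "nat \<Rightarrow> ('a list \<times> 'b list) pmf" and h :: "nat \<Rightarrow> nat"
  obtains \<Phi> :: "nat \<Rightarrow> 'a list \<Rightarrow> 'b list \<Rightarrow> bool list" and \<Psi>
  where "\<And>n. valid_code n (\<Phi> n)"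
    and "\<And>n. H_eps (P n) (\<gamma> n) < ennreal (B n) \<Longrightarrow>
      err_prob (P n) (\<Phi> n) (\<Psi> n) \<le> \<gamma> n + (B n + 1) / 2 ^ h n \<and>
      exp_len (P n) (\<Phi> n) \<le> ennreal (B n + real (h n) + 2)"
proof -
  define good where "good n \<phi> \<psi> \<longleftrightarrow> (\<forall>y. prefix_free {\<phi> x y | x. True}) \<and>
      (H_eps (P n) (\<gamma> n) < ennreal (B n) \<longrightarrow> err_prob (P n) \<phi> \<psi> \<le> \<gamma> n + (B n + 1) / 2 ^ h n \<and>
        exp_len (P n) \<phi> \<le> ennreal (B n + real (h n) + 2))" for n \<phi> \<psi>
  have "\<exists>\<phi> \<psi>. good n \<phi> \<psi>" for n
  proof (cases "H_eps (P n) (\<gamma> n) < ennreal (B n)")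
    case True
    then obtain \<phi> \<psi> where "\<And>y. prefix_free {\<phi> x y | x. True}"
      "err_prob (P n) \<phi> \<psi> \<le> \<gamma> n + (B n + 1) / 2 ^ h n" "exp_len (P n) \<phi> \<le> ennreal (B n + real (h n) + 2)"
      by (rule code_of_H_eps_less[where h = "h n"]) blast
    then show ?thesis unfolding good_def by blast
  next
    case False
    then show ?thesis unfolding good_def by (intro exI[of _ "\<lambda>_ _. []"] exI) (simp add: prefix_free_def)
  qed
  then have "\<exists>\<Phi> \<Psi>. \<forall>n. good n (\<Phi> n) (\<Psi> n)" by metis
  then obtain \<Phi> \<Psi> where good: "\<And>n. good n (\<Phi> n) (\<Psi> n)" by blast
  have "prefix_free {\<Phi> n x y | x. True}" for n y using good unfolding good_def by blast
  then have "valid_code n (\<Phi> n)" for n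
    unfolding valid_code_def by (blast intro: prefix_free_subset)
  with good show thesis unfolding good_def by (intro that) blast+
qed

lemma limsup_ennreal_le_of_eventually_le:
  fixes x :: "nat \<Rightarrow> real"
  assumes "0 \<le> \<epsilon>" and "\<And>d. 0 < d \<Longrightarrow> eventually (\<lambda>n. x n \<le> \<epsilon> + d) sequentially"
  shows "limsup (\<lambda>n. ennreal (x n)) \<le> ennreal \<epsilon>"
proof (rule ennreal_le_epsilon)
  fix d :: real assume d: "0 < d"
  from assms(2)[OF d] have "eventually (\<lambda>n. ennreal (x n) \<le> ennreal \<epsilon> + ennreal d) sequentially"
  proof eventually_elim
    case (elim n)
    then show ?case using assms(1) d by (simp add: ennreal_plus[symmetric] ennreal_leI del: ennreal_plus)
  qed
  then show "limsup (\<lambda>n. ennreal (x n)) \<le> ennreal \<epsilon> + ennreal d" by (rule Limsup_bounded)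
qed

text \<open>The slack \<open>\<delta> = 1 / Suc (\<mu> n)\<close> shrinks slowly enough that, for all large \<open>n\<close>, the one-shot
  code for that slack is available at blocklength \<open>n\<close>.\<close>

lemma achievable_of_limsup_H_eps_le:
  fixes P :: "nat \<Rightarrow> ('a list \<times> 'b list) pmf"
  assumes \<epsilon>: "0 \<le> \<epsilon>" and l: "0 \<le> l" and \<eta>: "0 < \<eta>"
    and H: "\<And>\<delta>. 0 < \<delta> \<Longrightarrow> limsup (\<lambda>n. ennreal (1 / real n) * H_eps (P n) (\<epsilon> + \<delta>)) \<le> ennreal l"
  shows "achievable P \<epsilon> (ennreal (l + \<eta>))"
proof -
  define c where "c = l + \<eta> / 2"
  have c0: "0 \<le> c" using l \<eta> by (simp add: c_def)
  define Q where "Q m n \<longleftrightarrow> H_eps (P n) (\<epsilon> + 1 / real (Suc m)) < ennreal (real n * c)" for m n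
  have "eventually (Q m) sequentially" for m
    unfolding Q_def using H[of "1 / real (Suc m)"] l \<eta> c0
    by (intro eventually_less_of_limsup_scaled_less) (simp_all add: c_def ennreal_less_iff le_less_trans)
  then obtain \<mu> where \<mu>: "\<And>m. eventually (\<lambda>n. m \<le> \<mu> n) sequentially"
    and Q\<mu>: "eventually (\<lambda>n. Q (\<mu> n) n) sequentially"
    using eventually_diagonal[of Q] by blast
  obtain \<Phi> \<Psi> where valid: "\<And>n. valid_code n (\<Phi> n)"
    and code: "\<And>n. Q (\<mu> n) n \<Longrightarrow>
      err_prob (P n) (\<Phi> n) (\<Psi> n) \<le> \<epsilon> + 1 / real (Suc (\<mu> n)) + (real n * c + 1) / 2 ^ header_len n \<and>
      exp_len (P n) (\<Phi> n) \<le> ennreal (real n * c + real (header_len n) + 2)"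
    unfolding Q_def
    by (rule code_sequence_of_H_eps_less[where P = P and \<gamma> = "\<lambda>n. \<epsilon> + 1 / real (Suc (\<mu> n))"
          and B = "\<lambda>n. real n * c" and h = header_len]) blast
  have "limsup (\<lambda>n. ennreal (err_prob (P n) (\<Phi> n) (\<Psi> n))) \<le> ennreal \<epsilon>"
  proof (rule limsup_ennreal_le_of_eventually_le[OF \<epsilon>])
    fix d :: real assume d: "0 < d"
    obtain m0 where m0: "1 / real (Suc m0) < d / 2"
      using reals_Archimedean[of "d / 2"] d by (auto simp: inverse_eq_divide)
    have "eventually (\<lambda>n. (real n * c + 1) / 2 ^ header_len n < d / 2) sequentially"
      using d by (intro order_tendstoD(2)[OF header_len_error_tendsto_0]) simp
    then show "eventually (\<lambda>n. err_prob (P n) (\<Phi> n) (\<Psi> n) \<le> \<epsilon> + d) sequentially"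
      using \<mu>[of m0] Q\<mu>
    proof eventually_elim
      case (elim n)
      have "1 / real (Suc (\<mu> n)) \<le> 1 / real (Suc m0)" using elim(2) by (simp add: frac_le)
      then show ?case using code[OF elim(3)] elim(1) m0 by linarith
    qed
  qed
  moreover have "limsup (\<lambda>n. ennreal (1 / real n) * exp_len (P n) (\<Phi> n)) \<le> ennreal (l + \<eta>)"
  proof (rule Limsup_bounded)
    have "eventually (\<lambda>n. (real (header_len n) + 2) / real n < \<eta> / 2) sequentially"
      using \<eta> by (intro order_tendstoD(2)[OF header_len_overhead_tendsto_0]) simp
    then show "eventually (\<lambda>n. ennreal (1 / real n) * exp_len (P n) (\<Phi> n) \<le> ennreal (l + \<eta>)) sequentially"
      using Q\<mu> eventually_gt_at_top[of 0]
    proof eventually_elim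
      case (elim n)
      have "ennreal (1 / real n) * exp_len (P n) (\<Phi> n)
          \<le> ennreal (1 / real n) * ennreal (real n * c + real (header_len n) + 2)"
        using code[OF elim(2)] by (intro mult_left_mono) simp_all
      also have "\<dots> = ennreal (1 / real n * (real n * c + real (header_len n) + 2))"
        by (rule ennreal_mult[symmetric]) (simp_all add: c0)
      also have "1 / real n * (real n * c + real (header_len n) + 2) = c + (real (header_len n) + 2) / real n"
        using elim(3) by (simp add: field_simps)
      also have "ennreal \<dots> \<le> ennreal (l + \<eta>)"
        using elim(1) unfolding c_def by (intro ennreal_leI) linarith
      finally show ?case .
    qed
  qed
  ultimately show ?thesis unfolding achievable_def using valid by blast
qed

lemma R_com_le_of_limsup_H_eps_le:
  fixes P :: "nat \<Rightarrow> ('a list \<times> 'b list) pmf"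
  assumes "0 \<le> \<epsilon>"
    and "\<And>\<delta>. 0 < \<delta> \<Longrightarrow> limsup (\<lambda>n. ennreal (1 / real n) * H_eps (P n) (\<epsilon> + \<delta>)) \<le> L"
  shows "R_com P \<epsilon> \<le> L"
proof (cases L)
  case (real l)
  show ?thesis
  proof (rule ennreal_le_epsilon)
    fix \<eta> :: real assume "0 < \<eta>"
    with assms real have "achievable P \<epsilon> (ennreal (l + \<eta>))"
      by (intro achievable_of_limsup_H_eps_le) simp_all
    then have "R_com P \<epsilon> \<le> ennreal (l + \<eta>)" unfolding R_com_def by (rule Inf_lower[OF CollectI])
    then show "R_com P \<epsilon> \<le> L + ennreal \<eta>" using real \<open>0 < \<eta>\<close> by (simp add: ennreal_plus)
  qed
qed simp

section \<open>The limit \<open>\<delta> \<rightarrow> 0\<close>\<close>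

lemma tendsto_at_right_0_squeeze:
  fixes F G :: "real \<Rightarrow> ennreal"
  assumes b: "0 < b"
    and bounds: "\<And>\<delta>. 0 < \<delta> \<Longrightarrow> \<delta> < b \<Longrightarrow> G \<delta> \<le> F \<delta> \<and> F \<delta> \<le> R"
    and antimono: "\<And>\<delta> \<delta>'. \<delta> \<le> \<delta>' \<Longrightarrow> G \<delta>' \<le> G \<delta>"
    and least: "\<And>L. (\<And>\<delta>. 0 < \<delta> \<Longrightarrow> G \<delta> \<le> L) \<Longrightarrow> R \<le> L"
  shows "(F \<longlongrightarrow> R) (at_right 0)"
proof (rule order_tendstoI)
  fix a assume "a < R"
  then have "\<not> R \<le> a" by simp
  then have "\<exists>\<delta>>0. \<not> G \<delta> \<le> a" using least[of a] by blast
  then obtain \<delta>0 where \<delta>0: "0 < \<delta>0" "a < G \<delta>0" by (auto simp: not_le)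
  have "a < F \<delta>" if "0 < \<delta>" "\<delta> < min \<delta>0 b" for \<delta>
    using \<delta>0(2) antimono[of \<delta> \<delta>0] bounds[of \<delta>] that by (auto intro: less_le_trans)
  then show "eventually (\<lambda>\<delta>. a < F \<delta>) (at_right 0)"
    unfolding eventually_at_right_field using \<delta>0 b by (intro exI[of _ "min \<delta>0 b"]) auto
next
  fix a assume "R < a"
  then have "F \<delta> < a" if "0 < \<delta>" "\<delta> < b" for \<delta> using bounds[OF that] by (auto intro: le_less_trans)
  then show "eventually (\<lambda>\<delta>. F \<delta> < a) (at_right 0)"
    unfolding eventually_at_right_field using b by blast
qed

lemma limsup_scaled_mono:
  fixes X Y :: "nat \<Rightarrow> ennreal"
  shows "(\<And>n. X n \<le> Y n) \<Longrightarrow> limsup (\<lambda>n. ennreal (1 / real n) * X n) \<le> limsup (\<lambda>n. ennreal (1 / real n) * Y n)"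
  by (intro Limsup_mono always_eventually allI mult_left_mono) simp_all

lemma limsup_H_eps_antimono:
  "\<gamma> \<le> \<gamma>' \<Longrightarrow> limsup (\<lambda>n. ennreal (1 / real n) * H_eps (P n) \<gamma>') \<le> limsup (\<lambda>n. ennreal (1 / real n) * H_eps (P n) \<gamma>)"
  by (intro limsup_scaled_mono H_eps_antimono)

lemma limsup_H_eps_le_Htilde_eps:
  "\<gamma> < 1 \<Longrightarrow> limsup (\<lambda>n. ennreal (1 / real n) * H_eps (P n) \<gamma>) \<le> limsup (\<lambda>n. ennreal (1 / real n) * Htilde_eps (P n) \<gamma>)"
  by (intro limsup_scaled_mono H_eps_le_Htilde_eps)

lemma limsup_Htilde_eps_le_Hhat_eps:
  "(\<And>n. sorted_enum (P n) (e n)) \<Longrightarrow> 0 < \<gamma> \<Longrightarrow>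
    limsup (\<lambda>n. ennreal (1 / real n) * Htilde_eps (P n) \<gamma>) \<le> limsup (\<lambda>n. ennreal (1 / real n) * Hhat_eps (P n) (e n) \<gamma>)"
  by (intro limsup_scaled_mono Htilde_eps_le_Hhat_eps)

lemma tendsto_R_com_if_between:
  fixes P :: "nat \<Rightarrow> ('a list \<times> 'b list) pmf"
  assumes "0 \<le> \<epsilon>" and "\<epsilon> < 1"
    and between: "\<And>\<delta>. 0 < \<delta> \<Longrightarrow> \<delta> < 1 - \<epsilon> \<Longrightarrow>
      limsup (\<lambda>n. ennreal (1 / real n) * H_eps (P n) (\<epsilon> + \<delta>)) \<le> F \<delta> \<and> F \<delta> \<le> R_com P \<epsilon>"
  shows "(F \<longlongrightarrow> R_com P \<epsilon>) (at_right 0)"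
proof (rule tendsto_at_right_0_squeeze)
  show "0 < 1 - \<epsilon>" using assms(2) by simp
  show "limsup (\<lambda>n. ennreal (1 / real n) * H_eps (P n) (\<epsilon> + \<delta>)) \<le> F \<delta> \<and> F \<delta> \<le> R_com P \<epsilon>"
    if "0 < \<delta>" "\<delta> < 1 - \<epsilon>" for \<delta>
    using between[OF that] .
  show "limsup (\<lambda>n. ennreal (1 / real n) * H_eps (P n) (\<epsilon> + \<delta>'))
      \<le> limsup (\<lambda>n. ennreal (1 / real n) * H_eps (P n) (\<epsilon> + \<delta>))" if "\<delta> \<le> \<delta>'" for \<delta> \<delta>'
    using that by (intro limsup_H_eps_antimono) simp
  show "R_com P \<epsilon> \<le> L"
    if "\<And>\<delta>. 0 < \<delta> \<Longrightarrow> limsup (\<lambda>n. ennreal (1 / real n) * H_eps (P n) (\<epsilon> + \<delta>)) \<le> L" for L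
    using R_com_le_of_limsup_H_eps_le[OF assms(1) that] .
qed

theorem theorem5:
  fixes P :: "nat \<Rightarrow> ('a::countable list \<times> 'b::countable list) pmf"
    and \<epsilon> :: real
  assumes "general_source P"
    and "0 \<le> \<epsilon>" and "\<epsilon> < 1"
  shows "((\<lambda>\<delta>. limsup (\<lambda>n. ennreal (1 / real n) * H_eps (P n) (\<epsilon> + \<delta>)))
            \<longlongrightarrow> R_com P \<epsilon>) (at_right 0) \<and>
         ((\<lambda>\<delta>. limsup (\<lambda>n. ennreal (1 / real n) * Htilde_eps (P n) (\<epsilon> + \<delta>)))
            \<longlongrightarrow> R_com P \<epsilon>) (at_right 0) \<and>
         (\<forall>e. (\<forall>n. sorted_enum (P n) (e n)) \<longrightarrow>
          ((\<lambda>\<delta>. limsup (\<lambda>n. ennreal (1 / real n) * Hhat_eps (P n) (e n) (\<epsilon> + \<delta>)))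
            \<longlongrightarrow> R_com P \<epsilon>) (at_right 0))"
proof -
  define FH where "FH \<delta> = limsup (\<lambda>n. ennreal (1 / real n) * H_eps (P n) (\<epsilon> + \<delta>))" for \<delta>
  define FT where "FT \<delta> = limsup (\<lambda>n. ennreal (1 / real n) * Htilde_eps (P n) (\<epsilon> + \<delta>))" for \<delta>
  note squeeze = tendsto_R_com_if_between[OF assms(2,3)]
  have H_T: "FH \<delta> \<le> FT \<delta>" if "\<delta> < 1 - \<epsilon>" for \<delta>
    unfolding FH_def FT_def using that by (intro limsup_H_eps_le_Htilde_eps) simp
  have T_R: "FT \<delta> \<le> R_com P \<epsilon>" if "0 < \<delta>" "\<delta> < 1 - \<epsilon>" for \<delta>
    unfolding FT_def using limsup_Htilde_eps_le_R_com[OF assms(1,2) that(1)] that by simp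
  show ?thesis
    unfolding FH_def[symmetric] FT_def[symmetric]
  proof (intro conjI allI impI)
    show "(FH \<longlongrightarrow> R_com P \<epsilon>) (at_right 0)" using order_trans[OF H_T T_R] by (intro squeeze) (simp add: FH_def)
    show "(FT \<longlongrightarrow> R_com P \<epsilon>) (at_right 0)" using H_T T_R by (intro squeeze) (simp add: FH_def)
    fix e assume e: "\<forall>n. sorted_enum (P n) (e n)"
    let ?FC = "\<lambda>\<delta>. limsup (\<lambda>n. ennreal (1 / real n) * Hhat_eps (P n) (e n) (\<epsilon> + \<delta>))"
    show "(?FC \<longlongrightarrow> R_com P \<epsilon>) (at_right 0)"
    proof (rule squeeze, fold FH_def)
      fix \<delta> assume \<delta>: "0 < \<delta>" "\<delta> < 1 - \<epsilon>"
      have "FT \<delta> \<le> ?FC \<delta>"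
        unfolding FT_def using e \<delta> assms(2) by (intro limsup_Htilde_eps_le_Hhat_eps) simp_all
      then show "FH \<delta> \<le> ?FC \<delta> \<and> ?FC \<delta> \<le> R_com P \<epsilon>"
        using order_trans[OF H_T[OF \<delta>(2)]] limsup_Hhat_eps_le_R_com[OF assms(1,2) \<delta>(1)] e \<delta> by simp
    qed
  qed
qed

end
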